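(* Let $\beta\ge5$ and $\epsilon\in\{1,-1\}$. Let $\Lambda_2$ be the quotient of $[4,8,2^\beta]^+$ by the relations $\sigma_2^2\sigma_1=\sigma_1\sigma_2^2$ and $\sigma_3\sigma_2^2=\sigma_2^2\sigma_3^{1+\epsilon2^{\beta-2}}$. Then $\Lambda_2$ is the automorphism group, with standard generators $\sigma_1,\sigma_2,\sigma_3$, of an atomic chiral $4$-polytope of type $\{4,8,2^\beta\}$.
   Context: $[p,q,r]^+=\langle\sigma_1,\sigma_2,\sigma_3\mid\sigma_1^p=\sigma_2^q=\sigma_3^r=(\sigma_1\sigma_2)^2=(\sigma_2\sigma_3)^2=(\sigma_1\sigma_2\sigma_3)^2=1\rangle$. Standard generators of a chiral polytope with base flag $\Phi$: $\Phi\sigma_i=\Phi^{i(i-1)}$, $\Phi^j$ the flag differing from $\Phi$ only in its $j$-face. Tight: type $\{p,q,r\}$ with exactly $2pqr$ flags. A tight chiral $4$-polytope is atomic if it does not properly cover any tight chiral polytope. *)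

theory Defs
  imports "HOL-Algebra.Algebra"
begin

text \<open>Words over an alphabet of generators; a letter (g, True) stands for g inverse.
  A set R of pairs (l, r) of words encodes the defining relations l = r.\<close>

inductive word_eqv :: "(('g \<times> bool) list \<times> ('g \<times> bool) list) set
    \<Rightarrow> ('g \<times> bool) list \<Rightarrow> ('g \<times> bool) list \<Rightarrow> bool"
  for R where
  refl: "word_eqv R w w"
| sym: "word_eqv R u v \<Longrightarrow> word_eqv R v u"
| trans: "word_eqv R u v \<Longrightarrow> word_eqv R v w \<Longrightarrow> word_eqv R u w"
| cancel: "word_eqv R (u @ [(x, b), (x, \<not> b)] @ v) (u @ v)"
| rel: "(l, r) \<in> R \<Longrightarrow> word_eqv R (u @ l @ v) (u @ r @ v)"

definition word_class :: "(('g \<times> bool) list \<times> ('g \<times> bool) list) set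
    \<Rightarrow> ('g \<times> bool) list \<Rightarrow> ('g \<times> bool) list set" where
  "word_class R w = {v. word_eqv R w v}"

definition pres_group :: "(('g \<times> bool) list \<times> ('g \<times> bool) list) set
    \<Rightarrow> ('g \<times> bool) list set monoid" where
  "pres_group R = \<lparr>carrier = range (word_class R),
     monoid.mult = (\<lambda>A B. word_class R ((SOME w. w \<in> A) @ (SOME w. w \<in> B))),
     one = word_class R []\<rparr>"

definition pres_gen :: "(('g \<times> bool) list \<times> ('g \<times> bool) list) set
    \<Rightarrow> 'g \<Rightarrow> ('g \<times> bool) list set" where
  "pres_gen R g = word_class R [(g, False)]"

definition wpow :: "'g \<Rightarrow> int \<Rightarrow> ('g \<times> bool) list" where
  "wpow g k = (if 0 \<le> k then replicate (nat k) (g, False) else replicate (nat (- k)) (g, True))"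

datatype gen3 = S1 | S2 | S3

text \<open>Relations of [4,8,2^beta]^+ together with the two extra relations defining Lambda_2.\<close>
definition Lambda2_rels :: "nat \<Rightarrow> int \<Rightarrow> ((gen3 \<times> bool) list \<times> (gen3 \<times> bool) list) set" where
  "Lambda2_rels \<beta> \<epsilon> =
    { (wpow S1 4, []),
      (wpow S2 8, []),
      (wpow S3 (2 ^ \<beta>), []),
      (wpow S1 1 @ wpow S2 1 @ wpow S1 1 @ wpow S2 1, []),
      (wpow S2 1 @ wpow S3 1 @ wpow S2 1 @ wpow S3 1, []),
      (wpow S1 1 @ wpow S2 1 @ wpow S3 1 @ wpow S1 1 @ wpow S2 1 @ wpow S3 1, []),
      (wpow S2 2 @ wpow S1 1, wpow S1 1 @ wpow S2 2),
      (wpow S3 1 @ wpow S2 2, wpow S2 2 @ wpow S3 (1 + \<epsilon> * 2 ^ (\<beta> - 2))) }"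

definition Lambda2 :: "nat \<Rightarrow> int \<Rightarrow> (gen3 \<times> bool) list set monoid" where
  "Lambda2 \<beta> \<epsilon> = pres_group (Lambda2_rels \<beta> \<epsilon>)"

section \<open>Rotation groups of chiral 4-polytopes (Schulte--Weiss characterization)\<close>

definition rot_group4 :: "('a, 'b) monoid_scheme \<Rightarrow> 'a \<Rightarrow> 'a \<Rightarrow> 'a \<Rightarrow> bool" where
  "rot_group4 G a b c \<longleftrightarrow>
     group G \<and> a \<in> carrier G \<and> b \<in> carrier G \<and> c \<in> carrier G \<and>
     a \<noteq> \<one>\<^bsub>G\<^esub> \<and> b \<noteq> \<one>\<^bsub>G\<^esub> \<and> c \<noteq> \<one>\<^bsub>G\<^esub> \<and>
     generate G {a, b, c} = carrier G \<and>
     (a \<otimes>\<^bsub>G\<^esub> b) [^]\<^bsub>G\<^esub> (2::nat) = \<one>\<^bsub>G\<^esub> \<and>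
     (b \<otimes>\<^bsub>G\<^esub> c) [^]\<^bsub>G\<^esub> (2::nat) = \<one>\<^bsub>G\<^esub> \<and>
     (a \<otimes>\<^bsub>G\<^esub> b \<otimes>\<^bsub>G\<^esub> c) [^]\<^bsub>G\<^esub> (2::nat) = \<one>\<^bsub>G\<^esub> \<and>
     generate G {a} \<inter> generate G {b} = {\<one>\<^bsub>G\<^esub>} \<and>
     generate G {b} \<inter> generate G {c} = {\<one>\<^bsub>G\<^esub>} \<and>
     generate G {a, b} \<inter> generate G {b, c} = generate G {b}"

text \<open>Chiral: rotation group of a polytope which is not directly regular, i.e. there is no
  group automorphism sending (s1,s2,s3) to (s1^-1, s1^2 s2, s3).\<close>
definition chiral4 :: "('a, 'b) monoid_scheme \<Rightarrow> 'a \<Rightarrow> 'a \<Rightarrow> 'a \<Rightarrow> bool" where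
  "chiral4 G a b c \<longleftrightarrow> rot_group4 G a b c \<and>
     \<not> (\<exists>\<phi>. \<phi> \<in> iso G G \<and> \<phi> a = inv\<^bsub>G\<^esub> a \<and> \<phi> b = a \<otimes>\<^bsub>G\<^esub> a \<otimes>\<^bsub>G\<^esub> b \<and> \<phi> c = c)"

text \<open>Type {p,q,r} with p,q,r the orders of the generators; tight: 2pqr flags, i.e.
  the rotation group has order pqr.\<close>
definition tight_chiral4 :: "('a, 'b) monoid_scheme \<Rightarrow> 'a \<Rightarrow> 'a \<Rightarrow> 'a \<Rightarrow> bool" where
  "tight_chiral4 G a b c \<longleftrightarrow> chiral4 G a b c \<and> finite (carrier G) \<and>
     2 * order G = 2 * (group.ord G a * group.ord G b * group.ord G c)"

text \<open>Atomic: tight, and does not properly cover any tight chiral polytope, i.e. no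
  nontrivial normal subgroup N yields a tight chiral quotient with the induced generators.\<close>
definition atomic_chiral4 :: "('a, 'b) monoid_scheme \<Rightarrow> 'a \<Rightarrow> 'a \<Rightarrow> 'a \<Rightarrow> bool" where
  "atomic_chiral4 G a b c \<longleftrightarrow> tight_chiral4 G a b c \<and>
     \<not> (\<exists>N. N \<lhd> G \<and> N \<noteq> {\<one>\<^bsub>G\<^esub>} \<and>
          tight_chiral4 (G Mod N) (N #>\<^bsub>G\<^esub> a) (N #>\<^bsub>G\<^esub> b) (N #>\<^bsub>G\<^esub> c))"

end

theory Submission
  imports Defs "HOL-Number_Theory.Cong"
begin

(* Every element of the presented group can be rewritten as a^i b^j c^k with i < 4, j < 8,
   k < 2^beta, and an action of the generators on Z/2^beta which satisfies the relations separates
   these 32 * 2^beta words; so the normal form is unique, the group has order 4 * 8 * 2^beta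
   (tightness) and the intersection property can be read off the normal form.
   The mirror substitution a -> a^-1, b -> a^2 b, c -> c respects every relation except
   c b^2 = b^2 c^s, which it only satisfies up to the central involution c^(2^(beta-1)); as this
   involution is nontrivial, the polytope is chiral.  If N is a nontrivial normal subgroup with tight
   quotient, counting shows that N is the product of its intersections with <a>, <b>, <c>, and
   conjugation by c then forces c^(2^(beta-1)) into N.  In G/N the mirror substitution therefore
   induces an automorphism, so G/N is not chiral: the polytope is atomic. *)

section \<open>Finitely presented groups\<close>

lemma word_eqv_append_left: "word_eqv R u v \<Longrightarrow> word_eqv R (x @ u) (x @ v)"
proof (induction rule: word_eqv.induct)
  case (cancel u y b v)
  then show ?case using word_eqv.cancel[of R "x @ u" y b v] by simp
next
  case (rel l r u v)
  then show ?case using word_eqv.rel[of l r R "x @ u" v] by simp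
qed (auto intro: word_eqv.intros)

lemma word_eqv_append_right: "word_eqv R u v \<Longrightarrow> word_eqv R (u @ y) (v @ y)"
proof (induction rule: word_eqv.induct)
  case (cancel u x b v)
  then show ?case using word_eqv.cancel[of R u x b "v @ y"] by simp
next
  case (rel l r u v)
  then show ?case using word_eqv.rel[of l r R u "v @ y"] by simp
qed (auto intro: word_eqv.intros)

lemma word_eqv_append:
  "word_eqv R u v \<Longrightarrow> word_eqv R u' v' \<Longrightarrow> word_eqv R (u @ u') (v @ v')"
  by (meson word_eqv.trans word_eqv_append_left word_eqv_append_right)

lemma word_class_eq_iff: "word_class R u = word_class R v \<longleftrightarrow> word_eqv R u v"
  unfolding word_class_def
  by (auto intro: word_eqv.refl word_eqv.trans word_eqv.sym)

lemma word_eqv_some_word_class: "word_eqv R u (SOME w. w \<in> word_class R u)"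
proof -
  have "u \<in> word_class R u" by (simp add: word_class_def word_eqv.refl)
  then have "(SOME w. w \<in> word_class R u) \<in> word_class R u" by (rule someI)
  then show ?thesis by (simp add: word_class_def)
qed

lemma pres_group_mult:
  "word_class R u \<otimes>\<^bsub>pres_group R\<^esub> word_class R v = word_class R (u @ v)"
  unfolding pres_group_def
  by (simp add: word_class_eq_iff word_eqv_append word_eqv_some_word_class word_eqv.sym)

lemma pres_group_one: "\<one>\<^bsub>pres_group R\<^esub> = word_class R []"
  by (simp add: pres_group_def)

lemma carrier_pres_group: "carrier (pres_group R) = range (word_class R)"
  by (simp add: pres_group_def)

definition word_inv :: "('g \<times> bool) list \<Rightarrow> ('g \<times> bool) list" where
  "word_inv w = rev (map (\<lambda>(x, b). (x, \<not> b)) w)"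

lemma word_inv_simps [simp]:
  "word_inv [] = []"
  "word_inv ((x, b) # w) = word_inv w @ [(x, \<not> b)]"
  by (auto simp: word_inv_def)

lemma word_eqv_append_word_inv: "word_eqv R (word_inv w @ w) []"
proof (induction w)
  case Nil
  then show ?case by (simp add: word_eqv.refl)
next
  case (Cons p w)
  obtain x b where p: "p = (x, b)" by (cases p)
  have "word_eqv R (word_inv w @ [(x, \<not> b), (x, \<not> \<not> b)] @ w) (word_inv w @ w)"
    by (rule word_eqv.cancel)
  then show ?case using Cons by (auto simp: p intro: word_eqv.trans)
qed

lemma group_pres_group: "group (pres_group R)"
proof (rule groupI)
  fix x
  assume "x \<in> carrier (pres_group R)"
  then obtain w where w: "x = word_class R w" by (auto simp: carrier_pres_group)
  show "\<exists>y\<in>carrier (pres_group R). y \<otimes>\<^bsub>pres_group R\<^esub> x = \<one>\<^bsub>pres_group R\<^esub>"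
    by (rule bexI[of _ "word_class R (word_inv w)"])
      (auto simp: w carrier_pres_group pres_group_mult pres_group_one word_class_eq_iff
        word_eqv_append_word_inv)
qed (auto simp: carrier_pres_group pres_group_mult pres_group_one)

lemma pres_group_inv:
  "inv\<^bsub>pres_group R\<^esub> (word_class R w) = word_class R (word_inv w)"
proof -
  interpret group "pres_group R" by (rule group_pres_group)
  show ?thesis
    by (rule inv_equality)
      (auto simp: pres_group_mult pres_group_one word_class_eq_iff word_eqv_append_word_inv
        carrier_pres_group)
qed

lemma pres_gen_closed: "pres_gen R g \<in> carrier (pres_group R)"
  by (simp add: pres_gen_def carrier_pres_group)

lemma word_class_letter:
  "word_class R [(g, b)] = (if b then inv\<^bsub>pres_group R\<^esub> (pres_gen R g) else pres_gen R g)"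
  by (simp add: pres_gen_def pres_group_inv)

definition eval_word :: "('b, 'c) monoid_scheme \<Rightarrow> ('g \<Rightarrow> 'b) \<Rightarrow> ('g \<times> bool) list \<Rightarrow> 'b" where
  "eval_word H f w = foldr (\<lambda>(x, b) r. (if b then inv\<^bsub>H\<^esub> (f x) else f x) \<otimes>\<^bsub>H\<^esub> r) w \<one>\<^bsub>H\<^esub>"

lemma eval_word_Nil [simp]: "eval_word H f [] = \<one>\<^bsub>H\<^esub>"
  by (simp add: eval_word_def)

lemma eval_word_Cons [simp]:
  "eval_word H f ((x, b) # w) = (if b then inv\<^bsub>H\<^esub> (f x) else f x) \<otimes>\<^bsub>H\<^esub> eval_word H f w"
  by (simp add: eval_word_def)

context
  fixes H :: "('b, 'c) monoid_scheme" and f :: "'g \<Rightarrow> 'b"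
  assumes H: "group H" and f_closed: "\<And>x. f x \<in> carrier H"
begin

interpretation H: group H by (rule H)

lemma eval_word_closed: "eval_word H f w \<in> carrier H"
  by (induction w) (auto simp: f_closed)

lemma eval_word_append: "eval_word H f (u @ v) = eval_word H f u \<otimes>\<^bsub>H\<^esub> eval_word H f v"
  by (induction u) (auto simp: H.m_assoc eval_word_closed f_closed)

lemma eval_word_replicate:
  "eval_word H f (replicate n (g, b)) = (if b then inv\<^bsub>H\<^esub> (f g) else f g) [^]\<^bsub>H\<^esub> n"
proof (induction n)
  case (Suc n)
  have "replicate (Suc n) (g, b) = replicate n (g, b) @ [(g, b)]"
    by (simp add: replicate_append_same)
  then show ?case using Suc by (simp add: eval_word_append f_closed)
qed simp

lemma eval_word_wpow: "eval_word H f (wpow g k) = f g [^]\<^bsub>H\<^esub> k"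
proof (cases "k < 0")
  case True
  then show ?thesis
    by (simp add: wpow_def eval_word_replicate H.nat_pow_inv[OF f_closed] int_pow_def2[of H "f g" k])
next
  case False
  then show ?thesis by (simp add: wpow_def eval_word_replicate pow_nat)
qed

lemma eval_word_word_eqv:
  assumes rels: "\<And>l r. (l, r) \<in> R \<Longrightarrow> eval_word H f l = eval_word H f r"
  shows "word_eqv R u v \<Longrightarrow> eval_word H f u = eval_word H f v"
proof (induction rule: word_eqv.induct)
  case (cancel u x b v)
  have "eval_word H f [(x, b), (x, \<not> b)] = \<one>\<^bsub>H\<^esub>"
    by (cases b) (simp_all add: f_closed)
  then show ?case
    by (simp only: eval_word_append eval_word_closed H.l_one)
next
  case (rel l r u v)
  then show ?case by (simp add: eval_word_append rels)
qed auto

lemma pres_group_universal: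
  assumes rels: "\<And>l r. (l, r) \<in> R \<Longrightarrow> eval_word H f l = eval_word H f r"
  obtains \<psi> where "\<psi> \<in> hom (pres_group R) H" "\<And>g. \<psi> (pres_gen R g) = f g"
proof -
  define \<psi> where "\<psi> Y = eval_word H f (SOME w. w \<in> Y)" for Y
  have \<psi>_class: "\<psi> (word_class R w) = eval_word H f w" for w
    unfolding \<psi>_def
    using eval_word_word_eqv[OF rels word_eqv_some_word_class[of R w]] by simp
  have "\<psi> \<in> hom (pres_group R) H"
    by (rule homI)
      (auto simp: carrier_pres_group pres_group_mult \<psi>_class eval_word_closed eval_word_append)
  moreover have "\<psi> (pres_gen R g) = f g" for g
    by (simp add: pres_gen_def \<psi>_class f_closed)
  ultimately show thesis by (rule that)
qed

end

lemma eval_word_pres_gen: "eval_word (pres_group R) (pres_gen R) w = word_class R w"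
proof (induction w)
  case Nil
  then show ?case by (simp add: pres_group_one)
next
  case (Cons p w)
  obtain g b where p: "p = (g, b)" by (cases p)
  have "word_class R (p # w) = word_class R [(g, b)] \<otimes>\<^bsub>pres_group R\<^esub> word_class R w"
    by (simp add: p pres_group_mult)
  then show ?case using Cons by (simp add: p word_class_letter)
qed

lemma eval_word_pres_gen_rel:
  "(l, r) \<in> R \<Longrightarrow> eval_word (pres_group R) (pres_gen R) l = eval_word (pres_group R) (pres_gen R) r"
  using word_eqv.rel[of l r R "[]" "[]"] by (simp add: eval_word_pres_gen word_class_eq_iff)

lemma generate_pres_gen: "generate (pres_group R) (range (pres_gen R)) = carrier (pres_group R)"
proof
  interpret group "pres_group R" by (rule group_pres_group)
  show "carrier (pres_group R) \<subseteq> generate (pres_group R) (range (pres_gen R))"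
  proof
    fix x
    assume "x \<in> carrier (pres_group R)"
    then obtain w where x: "x = word_class R w" by (auto simp: carrier_pres_group)
    have letter: "word_class R [p] \<in> generate (pres_group R) (range (pres_gen R))" for p
      by (cases p) (auto simp: word_class_letter intro: generate.incl generate.inv)
    have "word_class R w \<in> generate (pres_group R) (range (pres_gen R))"
    proof (induction w)
      case Nil
      show ?case by (simp add: pres_group_one[symmetric] generate.one)
    next
      case (Cons p w)
      then show ?case
        using generate.eng[OF letter[of p] Cons] by (simp add: pres_group_mult)
    qed
    then show "x \<in> generate (pres_group R) (range (pres_gen R))" by (simp add: x)
  qed
qed (simp add: group.generate_incl[OF group_pres_group] image_subset_iff pres_gen_closed)

section \<open>The defining relations of \<open>\<Lambda>\<^sub>2\<close> in an arbitrary group\<close>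

lemma (in group) int_pow_numeral: "x [^] (numeral k :: int) = x [^] (numeral k :: nat)"
  using int_pow_int[of G x "numeral k"] by simp

lemma (in group) int_pow_cong:
  assumes "x \<in> carrier G" "x [^] n = \<one>" "[k = l] (mod int n)"
  shows "x [^] (k :: int) = x [^] l"
proof -
  have "ord x dvd n" using assms(1,2) by (simp add: pow_eq_id)
  moreover have "int n dvd l - k" using assms(3) by (simp add: cong_iff_dvd_diff dvd_diff_commute)
  ultimately show ?thesis
    using assms(1) by (simp add: int_pow_eq) (metis dvd_trans int_dvd_int_iff)
qed

definition lambda2_relations :: "('a, 'b) monoid_scheme \<Rightarrow> nat \<Rightarrow> nat \<Rightarrow> 'a \<Rightarrow> 'a \<Rightarrow> 'a \<Rightarrow> bool" where
  "lambda2_relations H n s x y z \<longleftrightarrow>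
     x [^]\<^bsub>H\<^esub> (4::nat) = \<one>\<^bsub>H\<^esub> \<and> y [^]\<^bsub>H\<^esub> (8::nat) = \<one>\<^bsub>H\<^esub> \<and> z [^]\<^bsub>H\<^esub> n = \<one>\<^bsub>H\<^esub> \<and>
     x \<otimes>\<^bsub>H\<^esub> y \<otimes>\<^bsub>H\<^esub> x \<otimes>\<^bsub>H\<^esub> y = \<one>\<^bsub>H\<^esub> \<and> y \<otimes>\<^bsub>H\<^esub> z \<otimes>\<^bsub>H\<^esub> y \<otimes>\<^bsub>H\<^esub> z = \<one>\<^bsub>H\<^esub> \<and>
     x \<otimes>\<^bsub>H\<^esub> y \<otimes>\<^bsub>H\<^esub> z \<otimes>\<^bsub>H\<^esub> x \<otimes>\<^bsub>H\<^esub> y \<otimes>\<^bsub>H\<^esub> z = \<one>\<^bsub>H\<^esub> \<and>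
     y \<otimes>\<^bsub>H\<^esub> y \<otimes>\<^bsub>H\<^esub> x = x \<otimes>\<^bsub>H\<^esub> y \<otimes>\<^bsub>H\<^esub> y \<and>
     z \<otimes>\<^bsub>H\<^esub> y \<otimes>\<^bsub>H\<^esub> y = y \<otimes>\<^bsub>H\<^esub> y \<otimes>\<^bsub>H\<^esub> z [^]\<^bsub>H\<^esub> s"

lemma (in group_hom) lambda2_relations_image:
  assumes "x \<in> carrier G" "y \<in> carrier G" "z \<in> carrier G" "lambda2_relations G n s x y z"
  shows "lambda2_relations H n s (h x) (h y) (h z)"
  using assms by (simp add: lambda2_relations_def flip: hom_mult hom_nat_pow hom_one)

lemma two_pow_split: "k \<le> n \<Longrightarrow> (2::'a::comm_semiring_1) ^ n = 2 ^ k * 2 ^ (n - k)"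
  by (simp flip: power_add)

text \<open>For \<open>\<epsilon> = -1\<close> the exponent \<open>1 - 2\<^sup>\<beta>\<^sup>-\<^sup>2\<close> is replaced by the natural number
  \<open>1 + 3 \<cdot> 2\<^sup>\<beta>\<^sup>-\<^sup>2\<close>, congruent to it modulo the order \<open>2\<^sup>\<beta>\<close> of the third generator.\<close>

lemma (in group) pow_Lambda2_exponent:
  fixes \<beta> :: nat and \<epsilon> :: int
  assumes "5 \<le> \<beta>" "\<epsilon> \<in> {1, -1}" "z \<in> carrier G" "z [^] (16 * 2 ^ (\<beta> - 4) :: nat) = \<one>"
  shows "z [^] (1 + \<epsilon> * 2 ^ (\<beta> - 2)) = z [^] (1 + 4 * 2 ^ (\<beta> - 4) * (if \<epsilon> = 1 then 1 else 3) :: nat)"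
proof -
  have "(2::int) ^ (\<beta> - 2) = 4 * 2 ^ (\<beta> - 4)"
    using two_pow_split[of 2 "\<beta> - 2", where 'a = int] assms(1) by simp
  then have "[1 + \<epsilon> * 2 ^ (\<beta> - 2) = int (1 + 4 * 2 ^ (\<beta> - 4) * (if \<epsilon> = 1 then 1 else 3))]
      (mod int (16 * 2 ^ (\<beta> - 4)))"
    using assms(2) by (auto simp: cong_iff_dvd_diff)
  then have "z [^] (1 + \<epsilon> * 2 ^ (\<beta> - 2)) = z [^] int (1 + 4 * 2 ^ (\<beta> - 4) * (if \<epsilon> = 1 then 1 else 3))"
    by (rule int_pow_cong[OF assms(3,4)])
  then show ?thesis by (simp only: int_pow_int)
qed

lemma eval_word_Lambda2_rels_iff:
  assumes "5 \<le> \<beta>" "\<epsilon> \<in> {1, -1}" "group H" "\<And>g. f g \<in> carrier H"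
  shows "(\<forall>(l, r) \<in> Lambda2_rels \<beta> \<epsilon>. eval_word H f l = eval_word H f r) \<longleftrightarrow>
    lambda2_relations H (16 * 2 ^ (\<beta> - 4)) (1 + 4 * 2 ^ (\<beta> - 4) * (if \<epsilon> = 1 then 1 else 3))
      (f S1) (f S2) (f S3)"
proof -
  interpret H: group H by fact
  define w :: nat where "w = 2 ^ (\<beta> - 4)"
  define u :: nat where "u = (if \<epsilon> = 1 then 1 else 3)"
  have "(2::nat) ^ \<beta> = 16 * w"
    using two_pow_split[of 4 \<beta>, where 'a = nat] assms(1) by (simp add: w_def)
  moreover have "(2::int) ^ \<beta> = int ((2::nat) ^ \<beta>)" by simp
  ultimately have pow_two_pow: "x [^]\<^bsub>H\<^esub> ((2::int) ^ \<beta>) = x [^]\<^bsub>H\<^esub> (16 * w)" for x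
    by (simp only: int_pow_int)
  have eval_pow: "eval_word H f (wpow g k) = f g [^]\<^bsub>H\<^esub> k" for g k
    by (rule eval_word_wpow[OF assms(3,4)])
  have square: "f g [^]\<^bsub>H\<^esub> (2::nat) = f g \<otimes>\<^bsub>H\<^esub> f g" for g
    by (simp add: numeral_2_eq_2 assms(4))
  have twist: "f S3 [^]\<^bsub>H\<^esub> (1 + \<epsilon> * 2 ^ (\<beta> - 2)) = f S3 [^]\<^bsub>H\<^esub> (1 + 4 * w * u)"
    if "f S3 [^]\<^bsub>H\<^esub> (16 * w) = \<one>\<^bsub>H\<^esub>"
    using H.pow_Lambda2_exponent[OF assms(1,2,4) that[unfolded w_def]] by (simp add: w_def u_def)
  have "(\<forall>(l, r) \<in> Lambda2_rels \<beta> \<epsilon>. eval_word H f l = eval_word H f r) \<longleftrightarrow>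
    f S1 [^]\<^bsub>H\<^esub> (4::nat) = \<one>\<^bsub>H\<^esub> \<and> f S2 [^]\<^bsub>H\<^esub> (8::nat) = \<one>\<^bsub>H\<^esub> \<and>
    f S3 [^]\<^bsub>H\<^esub> (16 * w) = \<one>\<^bsub>H\<^esub> \<and>
    f S1 \<otimes>\<^bsub>H\<^esub> f S2 \<otimes>\<^bsub>H\<^esub> f S1 \<otimes>\<^bsub>H\<^esub> f S2 = \<one>\<^bsub>H\<^esub> \<and>
    f S2 \<otimes>\<^bsub>H\<^esub> f S3 \<otimes>\<^bsub>H\<^esub> f S2 \<otimes>\<^bsub>H\<^esub> f S3 = \<one>\<^bsub>H\<^esub> \<and>
    f S1 \<otimes>\<^bsub>H\<^esub> f S2 \<otimes>\<^bsub>H\<^esub> f S3 \<otimes>\<^bsub>H\<^esub> f S1 \<otimes>\<^bsub>H\<^esub> f S2 \<otimes>\<^bsub>H\<^esub> f S3 = \<one>\<^bsub>H\<^esub> \<and>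
    f S2 \<otimes>\<^bsub>H\<^esub> f S2 \<otimes>\<^bsub>H\<^esub> f S1 = f S1 \<otimes>\<^bsub>H\<^esub> f S2 \<otimes>\<^bsub>H\<^esub> f S2 \<and>
    f S3 \<otimes>\<^bsub>H\<^esub> f S2 \<otimes>\<^bsub>H\<^esub> f S2 =
      f S2 \<otimes>\<^bsub>H\<^esub> f S2 \<otimes>\<^bsub>H\<^esub> f S3 [^]\<^bsub>H\<^esub> (1 + \<epsilon> * 2 ^ (\<beta> - 2))"
    by (simp add: Lambda2_rels_def eval_word_append[OF assms(3,4)] eval_pow H.int_pow_numeral
        pow_two_pow square H.m_assoc assms(4))
  then show ?thesis
    unfolding w_def[symmetric] u_def[symmetric] using twist by (auto simp: lambda2_relations_def)
qed

section \<open>Normal forms\<close>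

lemma (in group) pow_mod_eq:
  assumes "x \<in> carrier G" "x [^] (m::nat) = \<one>"
  shows "x [^] (i mod m) = x [^] (i::nat)"
proof -
  have "x [^] i = x [^] (m * (i div m)) \<otimes> x [^] (i mod m)"
    using assms(1) by (simp add: nat_pow_mult)
  also have "x [^] (m * (i div m)) = \<one>"
    using assms by (simp add: nat_pow_pow[symmetric])
  finally show ?thesis using assms(1) by simp
qed

lemma (in group) inv_eq_of_mult_eq_one:
  "x \<otimes> y = \<one> \<Longrightarrow> x \<in> carrier G \<Longrightarrow> y \<in> carrier G \<Longrightarrow> inv x = y"
  by (rule inv_equality[OF inv_comm])

lemma (in monoid) nat_pow_mult_assoc:
  "x \<in> carrier G \<Longrightarrow> y \<in> carrier G \<Longrightarrow> x [^] (i::nat) \<otimes> (x [^] (j::nat) \<otimes> y) = x [^] (i + j) \<otimes> y"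
  by (simp add: m_assoc[symmetric] nat_pow_mult)

lemma (in group) inv_eq_pow:
  assumes "x \<in> carrier G" "x [^] Suc k = \<one>"
  shows "inv x = x [^] k"
  using assms by (intro inv_equality) simp_all

lemma (in group) generate_subset_right_mult_closed:
  assumes A: "A \<subseteq> carrier G" and inv_pow: "\<And>g. g \<in> A \<Longrightarrow> \<exists>k::nat. inv g = g [^] k"
    and S: "S \<subseteq> carrier G" "\<one> \<in> S" and closed: "\<And>x g. x \<in> S \<Longrightarrow> g \<in> A \<Longrightarrow> x \<otimes> g \<in> S"
  shows "generate G A \<subseteq> S"
proof -
  define T where "T = {h \<in> carrier G. \<forall>x \<in> S. x \<otimes> h \<in> S}"
  have pow_T: "g \<in> A \<Longrightarrow> g [^] (k::nat) \<in> T" for g k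
  proof (induction k)
    case 0
    then show ?case using S by (auto simp: T_def subsetD)
  next
    case (Suc k)
    have "x \<otimes> g [^] Suc k = (x \<otimes> g [^] k) \<otimes> g" if "x \<in> S" for x
      using that Suc.prems A S(1) by (auto simp: m_assoc subsetD)
    then show ?case
      using Suc A by (auto simp: T_def closed)
  qed
  have "generate G A \<subseteq> T"
  proof
    fix h
    assume "h \<in> generate G A"
    then show "h \<in> T"
    proof (induction rule: generate.induct)
      case one
      then show ?case using pow_T[of _ 0] S by (auto simp: T_def subsetD)
    next
      case (incl g)
      then show ?case using pow_T[of g 1] A by (auto simp: subsetD)
    next
      case (inv g)
      then show ?case using pow_T inv_pow by metis
    next
      case (eng h1 h2)
      have "x \<otimes> (h1 \<otimes> h2) = x \<otimes> h1 \<otimes> h2" if "x \<in> S" for x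
        using that eng S(1) by (auto simp: T_def m_assoc subsetD)
      then show ?case using eng by (auto simp: T_def)
    qed
  qed
  show ?thesis
  proof
    fix x
    assume "x \<in> generate G A"
    then have "x \<in> carrier G" "\<one> \<otimes> x \<in> S"
      using \<open>generate G A \<subseteq> T\<close> S(2) by (auto simp: T_def)
    then show "x \<in> S" by simp
  qed
qed

text \<open>For \<open>\<Lambda>\<^sub>2\<close> one takes \<open>w = 2\<^sup>\<beta>\<^sup>-\<^sup>4\<close>, so that \<open>n = 16w = 2\<^sup>\<beta>\<close>, and \<open>u = 1\<close> or \<open>3\<close>
  according to \<open>\<epsilon>\<close>; the proofs only use that \<open>u\<close> is odd.\<close>

locale lambda2_group = group G for G (structure) +
  fixes a b c :: 'a and w u :: nat
  assumes gens_closed [simp]: "a \<in> carrier G" "b \<in> carrier G" "c \<in> carrier G"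
    and w_pos: "0 < w" and u_odd: "odd u"
    and relations: "lambda2_relations G (16 * w) (1 + 4 * w * u) a b c"
begin

abbreviation n :: nat where "n \<equiv> 16 * w"
abbreviation s :: nat where "s \<equiv> 1 + 4 * w * u"

lemma a_pow_4: "a [^] (4::nat) = \<one>"
  and b_pow_8: "b [^] (8::nat) = \<one>"
  and c_pow_n: "c [^] n = \<one>"
  and abab: "a \<otimes> b \<otimes> a \<otimes> b = \<one>"
  and bcbc: "b \<otimes> c \<otimes> b \<otimes> c = \<one>"
  and abcabc: "a \<otimes> b \<otimes> c \<otimes> a \<otimes> b \<otimes> c = \<one>"
  and bba: "b \<otimes> b \<otimes> a = a \<otimes> b \<otimes> b"
  and cbb: "c \<otimes> b \<otimes> b = b \<otimes> b \<otimes> c [^] s"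
  using relations by (simp_all add: lambda2_relations_def)

lemmas closed_simps = gens_closed nat_pow_closed m_closed inv_closed nat_pow_mult_assoc

lemma inv_a: "inv a = a [^] (3::nat)"
  using inv_eq_pow[of a 3] a_pow_4 by (simp add: numeral_eq_Suc del: nat_pow_Suc)

lemma inv_b: "inv b = b [^] (7::nat)"
  using inv_eq_pow[of b 7] b_pow_8 by (simp add: numeral_eq_Suc del: nat_pow_Suc)

lemma inv_c: "inv c = c [^] (n - 1)"
  using inv_eq_pow[of c "n - 1"] c_pow_n w_pos by (simp add: Suc_diff_Suc)

lemma a_pow_mod: "a [^] (i mod 4) = a [^] (i::nat)"
  by (rule pow_mod_eq[OF _ a_pow_4]) simp

lemma b_pow_mod: "b [^] (i mod 8) = b [^] (i::nat)"
  by (rule pow_mod_eq[OF _ b_pow_8]) simp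

lemma c_pow_mod: "c [^] (i mod n) = c [^] (i::nat)"
  by (rule pow_mod_eq[OF _ c_pow_n]) simp

lemma b_a: "b \<otimes> a = a [^] (3::nat) \<otimes> b [^] (7::nat)"
proof -
  have "a \<otimes> (b \<otimes> a \<otimes> b) = \<one>" using abab by (simp add: m_assoc)
  then have "b \<otimes> a \<otimes> b = inv a" by (simp add: inv_eq_of_mult_eq_one)
  then have "b \<otimes> a = inv a \<otimes> inv b" by (simp add: inv_solve_right)
  then show ?thesis by (simp add: inv_a inv_b)
qed

lemma c_a: "c \<otimes> a = a \<otimes> b [^] (2::nat) \<otimes> c"
proof -
  have ab_inv: "inv (a \<otimes> b) = a \<otimes> b" and bc_inv: "inv (b \<otimes> c) = b \<otimes> c"
    using abab bcbc by (simp_all add: inv_eq_of_mult_eq_one m_assoc)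
  have "a \<otimes> b \<otimes> (c \<otimes> a \<otimes> (b \<otimes> c)) = \<one>" using abcabc by (simp add: m_assoc)
  then have "c \<otimes> a \<otimes> (b \<otimes> c) = a \<otimes> b"
    using ab_inv inv_eq_of_mult_eq_one[of "a \<otimes> b" "c \<otimes> a \<otimes> (b \<otimes> c)"] by simp
  then have "c \<otimes> a = a \<otimes> b \<otimes> inv (b \<otimes> c)" by (simp add: inv_solve_right)
  then show ?thesis by (simp add: bc_inv numeral_2_eq_2 m_assoc)
qed

lemma c_b: "c \<otimes> b = b [^] (7::nat) \<otimes> c [^] (n - 1)"
proof -
  have "b \<otimes> (c \<otimes> b \<otimes> c) = \<one>" using bcbc by (simp add: m_assoc)
  then have "c \<otimes> b \<otimes> c = inv b" by (simp add: inv_eq_of_mult_eq_one)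
  then have "c \<otimes> b = inv b \<otimes> inv c" by (simp add: inv_solve_right)
  then show ?thesis by (simp add: inv_b inv_c)
qed

lemma b_pow_even_a_pow: "b [^] (2 * m) \<otimes> a [^] (i::nat) = a [^] i \<otimes> b [^] (2 * (m::nat))"
proof -
  have "b [^] (2::nat) \<otimes> a = a \<otimes> b [^] (2::nat)"
    using bba by (simp add: numeral_eq_Suc m_assoc)
  then have "(b [^] (2::nat)) [^] m \<otimes> a = a \<otimes> (b [^] (2::nat)) [^] m"
    by (rule group_commutes_pow) simp_all
  then have "a \<otimes> b [^] (2 * m) = b [^] (2 * m) \<otimes> a"
    by (simp add: nat_pow_pow)
  then show ?thesis
    by (rule group_commutes_pow[symmetric]) simp_all
qed

lemma c_pow_b_pow_even: "c [^] (k::nat) \<otimes> b [^] (2 * m) = b [^] (2 * m) \<otimes> c [^] (k * s ^ (m::nat))"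
proof (induction m arbitrary: k)
  case 0
  then show ?case by simp
next
  case (Suc m)
  have c_b2: "c [^] (k::nat) \<otimes> b [^] (2::nat) = b [^] (2::nat) \<otimes> c [^] (k * s)" for k
  proof (induction k)
    case (Suc k)
    have "c [^] Suc k \<otimes> b [^] (2::nat) = c [^] k \<otimes> (c \<otimes> b [^] (2::nat))"
      by (simp add: m_assoc)
    also have "\<dots> = (c [^] k \<otimes> b [^] (2::nat)) \<otimes> c [^] s"
      using cbb by (simp add: numeral_eq_Suc m_assoc)
    also have "\<dots> = b [^] (2::nat) \<otimes> c [^] (k * s + s)"
      by (simp only: Suc m_assoc nat_pow_mult closed_simps)
    also have "k * s + s = Suc k * s" by simp
    finally show ?case .
  qed simp
  have e: "b [^] (2 * Suc m) = b [^] (2 * m) \<otimes> b [^] (2::nat)"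
    by (simp add: nat_pow_mult)
  have "c [^] k \<otimes> b [^] (2 * Suc m) = (c [^] k \<otimes> b [^] (2 * m)) \<otimes> b [^] (2::nat)"
    by (simp only: e m_assoc closed_simps)
  also have "\<dots> = b [^] (2 * m) \<otimes> (c [^] (k * s ^ m) \<otimes> b [^] (2::nat))"
    by (simp only: Suc m_assoc closed_simps)
  also have "\<dots> = b [^] (2 * Suc m) \<otimes> c [^] (k * s ^ m * s)"
    by (simp only: c_b2 e m_assoc closed_simps)
  also have "k * s ^ m * s = k * s ^ Suc m" by (simp only: power_Suc2 mult.assoc)
  finally show ?case .
qed

lemma c_pow_a: "c [^] (k::nat) \<otimes> a = a \<otimes> b [^] (2 * k) \<otimes> c [^] (\<Sum>i<k. s ^ i)"
proof (induction k)
  case 0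
  then show ?case by simp
next
  case (Suc k)
  have "c [^] Suc k \<otimes> a = c \<otimes> (c [^] k \<otimes> a)"
    by (simp only: nat_pow_Suc2 m_assoc closed_simps)
  also have "\<dots> = (c \<otimes> a) \<otimes> (b [^] (2 * k) \<otimes> c [^] (\<Sum>i<k. s ^ i))"
    by (simp only: Suc m_assoc closed_simps)
  also have "\<dots> = a \<otimes> b [^] (2::nat) \<otimes> ((c [^] (1::nat) \<otimes> b [^] (2 * k)) \<otimes> c [^] (\<Sum>i<k. s ^ i))"
    by (simp add: c_a m_assoc)
  also have "\<dots> = a \<otimes> (b [^] (2::nat) \<otimes> b [^] (2 * k)) \<otimes> (c [^] (s ^ k) \<otimes> c [^] (\<Sum>i<k. s ^ i))"
    by (simp only: c_pow_b_pow_even m_assoc closed_simps mult_1)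
  also have "\<dots> = a \<otimes> b [^] (2 * Suc k) \<otimes> c [^] (\<Sum>i<Suc k. s ^ i)"
    by (simp add: nat_pow_mult add.commute)
  finally show ?case .
qed

lemma b_pow_a_exchange: "\<exists>i' j'. b [^] (j::nat) \<otimes> a = a [^] (i'::nat) \<otimes> b [^] (j'::nat)"
proof (cases "even j")
  case True
  then have "b [^] j \<otimes> a = a [^] (1::nat) \<otimes> b [^] j"
    using b_pow_even_a_pow[of "j div 2" 1] by simp
  then show ?thesis by blast
next
  case False
  then obtain m where j: "j = Suc (2 * m)" by (metis oddE Suc_eq_plus1)
  have "b [^] j \<otimes> a = b [^] (2 * m) \<otimes> (b \<otimes> a)"
    by (simp only: j nat_pow_Suc m_assoc closed_simps)
  also have "\<dots> = (b [^] (2 * m) \<otimes> a [^] (3::nat)) \<otimes> b [^] (7::nat)"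
    by (simp only: b_a m_assoc closed_simps)
  also have "\<dots> = a [^] (3::nat) \<otimes> b [^] (2 * m + 7)"
    by (simp only: b_pow_even_a_pow m_assoc nat_pow_mult closed_simps)
  finally show ?thesis by blast
qed

lemma c_b_pow_exchange: "\<exists>j' l. c \<otimes> b [^] (j::nat) = b [^] (j'::nat) \<otimes> c [^] (l::nat)"
proof (cases "even j")
  case True
  then show ?thesis using c_pow_b_pow_even[of 1 "j div 2"] by auto
next
  case False
  then obtain m where j: "j = Suc (2 * m)" by (metis oddE Suc_eq_plus1)
  have "c \<otimes> b [^] j = (c \<otimes> b) \<otimes> b [^] (2 * m)"
    by (simp only: j nat_pow_Suc2 m_assoc closed_simps)
  also have "\<dots> = b [^] (7::nat) \<otimes> (c [^] (n - 1) \<otimes> b [^] (2 * m))"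
    by (simp only: c_b m_assoc closed_simps)
  also have "\<dots> = b [^] (7 + 2 * m) \<otimes> c [^] ((n - 1) * s ^ m)"
    by (simp only: c_pow_b_pow_even m_assoc nat_pow_mult closed_simps)
  finally show ?thesis by blast
qed

lemma c_pow_b_exchange: "\<exists>j' l. c [^] (k::nat) \<otimes> b = b [^] (j'::nat) \<otimes> c [^] (l::nat)"
proof (induction k)
  case 0
  have "c [^] (0::nat) \<otimes> b = b [^] (1::nat) \<otimes> c [^] (0::nat)" by simp
  then show ?case by blast
next
  case (Suc k)
  then obtain j1 l1 where e1: "c [^] k \<otimes> b = b [^] (j1::nat) \<otimes> c [^] (l1::nat)" by blast
  obtain j2 l2 where e2: "c \<otimes> b [^] j1 = b [^] (j2::nat) \<otimes> c [^] (l2::nat)"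
    using c_b_pow_exchange by blast
  have "c [^] Suc k \<otimes> b = c \<otimes> (c [^] k \<otimes> b)" by (simp only: nat_pow_Suc2 m_assoc closed_simps)
  also have "\<dots> = (c \<otimes> b [^] j1) \<otimes> c [^] l1" by (simp only: e1 m_assoc closed_simps)
  also have "\<dots> = b [^] j2 \<otimes> c [^] (l2 + l1)" by (simp only: e2 m_assoc nat_pow_mult closed_simps)
  finally show ?case by blast
qed

definition nf :: "nat \<Rightarrow> nat \<Rightarrow> nat \<Rightarrow> 'a" where
  "nf i j k = a [^] i \<otimes> b [^] j \<otimes> c [^] k"

lemma nf_closed [simp]: "nf i j k \<in> carrier G"
  by (simp add: nf_def)

lemma nf_mod: "nf (i mod 4) (j mod 8) (k mod n) = nf i j k"
  by (simp add: nf_def a_pow_mod b_pow_mod c_pow_mod)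

lemma nf_mult_a: "\<exists>i' j' k'. nf i j k \<otimes> a = nf i' j' k'"
proof -
  obtain i1 j1 where e: "b [^] j \<otimes> a = a [^] (i1::nat) \<otimes> b [^] (j1::nat)"
    using b_pow_a_exchange by blast
  have "nf i j k \<otimes> a = a [^] i \<otimes> (b [^] j \<otimes> a) \<otimes> b [^] (2 * k) \<otimes> c [^] (\<Sum>i<k. s ^ i)"
    by (simp add: nf_def m_assoc c_pow_a)
  also have "\<dots> = nf (i + i1) (j1 + 2 * k) (\<Sum>i<k. s ^ i)"
    by (simp add: e nf_def m_assoc nat_pow_mult_assoc)
  finally show ?thesis by blast
qed

lemma nf_mult_b: "\<exists>i' j' k'. nf i j k \<otimes> b = nf i' j' k'"
proof -
  obtain j1 l where e: "c [^] k \<otimes> b = b [^] (j1::nat) \<otimes> c [^] (l::nat)"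
    using c_pow_b_exchange by blast
  have "nf i j k \<otimes> b = a [^] i \<otimes> b [^] j \<otimes> (c [^] k \<otimes> b)"
    by (simp add: nf_def m_assoc)
  also have "\<dots> = nf i (j + j1) l"
    by (simp add: e nf_def m_assoc nat_pow_mult_assoc)
  finally show ?thesis by blast
qed

lemma nf_mult_c: "nf i j k \<otimes> c = nf i j (Suc k)"
  by (simp add: nf_def m_assoc)

lemma generate_subset_nf: "generate G {a, b, c} \<subseteq> {nf i j k | i j k. True}"
proof (rule generate_subset_right_mult_closed)
  show "\<exists>k::nat. inv g = g [^] k" if "g \<in> {a, b, c}" for g
    using that inv_a inv_b inv_c by blast
  show "\<one> \<in> {nf i j k | i j k. True}"
    by (rule CollectI, rule exI[of _ 0], rule exI[of _ 0], rule exI[of _ 0]) (simp add: nf_def)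
  show "x \<otimes> g \<in> {nf i j k | i j k. True}" if "x \<in> {nf i j k | i j k. True}" "g \<in> {a, b, c}" for x g
    using that nf_mult_a nf_mult_b nf_mult_c by blast
qed auto

lemma eight_w_mult_odd_mod: "odd t \<Longrightarrow> (8 * w * t) mod n = 8 * w"
proof -
  assume "odd t"
  then obtain r where t: "t = 2 * r + 1" by (rule oddE)
  have "(8 * w * t) mod (16 * w) = (w * (8 * t)) mod (w * 16)" by (simp add: ac_simps)
  also have "\<dots> = w * ((8 * t) mod 16)" by (rule mod_mult_mult1)
  also have "(8 * t) mod 16 = 8" by (simp add: t)
  finally show ?thesis by (simp add: mult.commute)
qed

lemma c_pow_s_cube: "c [^] (s ^ 3) = c [^] s \<otimes> c [^] (8 * w)"
proof -
  define t where "t = u * (1 + 4 * w * u) * (1 + 2 * w * u)"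
  have "odd t" using u_odd by (simp add: t_def)
  have "s ^ 3 = s + 8 * w * t" by (simp add: t_def power3_eq_cube algebra_simps)
  then have "c [^] (s ^ 3) = c [^] s \<otimes> c [^] (8 * w * t)"
    by (simp only: nat_pow_mult closed_simps)
  also have "c [^] (8 * w * t) = c [^] (8 * w)"
    by (metis c_pow_mod eight_w_mult_odd_mod[OF \<open>odd t\<close>])
  finally show ?thesis .
qed

lemma c_pow_s_square: "c [^] (s ^ 2 + (n - 1)) = c [^] (8 * w)"
proof -
  have "s ^ 2 + (n - 1) = 8 * w * u + n * (1 + w * u * u)"
    using w_pos by (simp add: power2_eq_square algebra_simps)
  then have "(s ^ 2 + (n - 1)) mod n = (8 * w * u) mod n"
    by (simp only: mod_mult_self2)
  also have "\<dots> = 8 * w" by (rule eight_w_mult_odd_mod[OF u_odd])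
  finally show ?thesis by (metis c_pow_mod)
qed

lemma b_a_square: "b \<otimes> a [^] (2::nat) = a [^] (2::nat) \<otimes> b [^] (5::nat)"
proof -
  have b6: "b [^] (6::nat) \<otimes> a [^] (3::nat) = a [^] (3::nat) \<otimes> b [^] (6::nat)"
    using b_pow_even_a_pow[of 3 3] by simp
  have b7: "b [^] (7::nat) = b [^] (6::nat) \<otimes> b"
    using nat_pow_mult[of b 6 1] by simp
  have "b \<otimes> a [^] (2::nat) = (b \<otimes> a) \<otimes> a" by (simp add: numeral_2_eq_2 m_assoc)
  also have "\<dots> = a [^] (3::nat) \<otimes> (b [^] (6::nat) \<otimes> (b \<otimes> a))"
    by (simp only: b_a b7 m_assoc closed_simps)
  also have "\<dots> = a [^] (3::nat) \<otimes> ((b [^] (6::nat) \<otimes> a [^] (3::nat)) \<otimes> b [^] (7::nat))"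
    by (simp only: b_a m_assoc closed_simps)
  also have "\<dots> = a [^] (3 + 3 :: nat) \<otimes> b [^] (6 + 7 :: nat)"
    by (simp only: b6 m_assoc closed_simps nat_pow_mult)
  also have "\<dots> = a [^] (2::nat) \<otimes> b [^] (5::nat)"
    using a_pow_mod[of 6] b_pow_mod[of 13] by simp
  finally show ?thesis .
qed

lemma twisted_b_square: "(a [^] (2::nat) \<otimes> b) \<otimes> (a [^] (2::nat) \<otimes> b) = b [^] (6::nat)"
proof -
  have "(a [^] (2::nat) \<otimes> b) \<otimes> (a [^] (2::nat) \<otimes> b) =
      a [^] (2::nat) \<otimes> ((b \<otimes> a [^] (2::nat)) \<otimes> b [^] (1::nat))"
    by (simp only: m_assoc closed_simps nat_pow_eone)
  also have "\<dots> = a [^] (2 + 2 :: nat) \<otimes> b [^] (5 + 1 :: nat)"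
    by (simp only: b_a_square m_assoc closed_simps nat_pow_mult)
  also have "\<dots> = b [^] (6::nat)" using a_pow_4 by simp
  finally show ?thesis .
qed

lemma twisted_b_pow_even: "(a [^] (2::nat) \<otimes> b) [^] (2 * m :: nat) = b [^] (6 * m)"
proof -
  have "(a [^] (2::nat) \<otimes> b) [^] (2 * m :: nat) = ((a [^] (2::nat) \<otimes> b) [^] (2::nat)) [^] m"
    by (simp add: nat_pow_pow)
  also have "(a [^] (2::nat) \<otimes> b) [^] (2::nat) = b [^] (6::nat)"
    using twisted_b_square by (simp add: numeral_2_eq_2)
  finally show ?thesis by (simp add: nat_pow_pow)
qed

text \<open>The relation \<open>c b\<^sup>2 = b\<^sup>2 c\<^sup>s\<close> holds for the twisted generators only up to the
  central involution \<open>c\<^sup>8\<^sup>w\<close>; this is what makes the polytope chiral, and what a proper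
  tight quotient would have to kill.\<close>

lemma twisted_cbb:
  "c \<otimes> (a [^] (2::nat) \<otimes> b) \<otimes> (a [^] (2::nat) \<otimes> b) =
    (a [^] (2::nat) \<otimes> b) \<otimes> (a [^] (2::nat) \<otimes> b) \<otimes> c [^] s \<otimes> c [^] (8 * w)"
proof -
  have "c \<otimes> b [^] (6::nat) = b [^] (6::nat) \<otimes> c [^] (s ^ 3)"
    using c_pow_b_pow_even[of 1 3] by simp
  then have "c \<otimes> ((a [^] (2::nat) \<otimes> b) \<otimes> (a [^] (2::nat) \<otimes> b)) =
      (a [^] (2::nat) \<otimes> b) \<otimes> (a [^] (2::nat) \<otimes> b) \<otimes> (c [^] s \<otimes> c [^] (8 * w))"
    by (simp only: twisted_b_square c_pow_s_cube)
  then show ?thesis by (simp add: m_assoc)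
qed

lemma c_a_square: "c \<otimes> a [^] (2::nat) = a [^] (2::nat) \<otimes> b [^] (4::nat) \<otimes> c"
proof -
  have a2: "a \<otimes> a = a [^] (2::nat)" by (simp add: numeral_2_eq_2)
  have b2a: "b [^] (2::nat) \<otimes> a = a \<otimes> b [^] (2::nat)"
    using b_pow_even_a_pow[of 1 1] by simp
  have "c \<otimes> a [^] (2::nat) = (c \<otimes> a) \<otimes> a" by (simp add: a2[symmetric] m_assoc)
  also have "\<dots> = a \<otimes> ((b [^] (2::nat) \<otimes> a) \<otimes> (b [^] (2::nat) \<otimes> c))"
    by (simp only: c_a m_assoc closed_simps)
  also have "\<dots> = (a \<otimes> a) \<otimes> (b [^] (2::nat) \<otimes> (b [^] (2::nat) \<otimes> c))"
    by (simp only: b2a m_assoc closed_simps)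
  also have "\<dots> = a [^] (2::nat) \<otimes> b [^] (4::nat) \<otimes> c"
    by (simp only: a2 nat_pow_mult_assoc closed_simps) (simp add: m_assoc)
  finally show ?thesis .
qed

lemma twisted_bcbc: "(a [^] (2::nat) \<otimes> b) \<otimes> c \<otimes> (a [^] (2::nat) \<otimes> b) \<otimes> c = \<one>"
proof -
  have "b \<otimes> (c \<otimes> a [^] (2::nat)) = (b \<otimes> a [^] (2::nat)) \<otimes> (b [^] (4::nat) \<otimes> c)"
    using c_a_square by (simp add: m_assoc)
  also have "\<dots> = a [^] (2::nat) \<otimes> (b [^] (5 + 4 :: nat) \<otimes> c)"
    by (simp only: b_a_square m_assoc closed_simps)
  also have "b [^] (5 + 4 :: nat) = b" using b_pow_mod[of 9] by simp
  finally have e: "b \<otimes> (c \<otimes> a [^] (2::nat)) = a [^] (2::nat) \<otimes> b \<otimes> c" by (simp add: m_assoc)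
  have "(a [^] (2::nat) \<otimes> b) \<otimes> c \<otimes> (a [^] (2::nat) \<otimes> b) \<otimes> c =
      a [^] (2::nat) \<otimes> ((b \<otimes> (c \<otimes> a [^] (2::nat))) \<otimes> (b \<otimes> c))"
    by (simp add: m_assoc)
  also have "\<dots> = a [^] (2 + 2 :: nat) \<otimes> (b \<otimes> c \<otimes> (b \<otimes> c))"
    by (simp only: e m_assoc closed_simps)
  also have "\<dots> = \<one>" using a_pow_4 bcbc by (simp add: m_assoc)
  finally show ?thesis .
qed

lemma twisted_bba:
  "(a [^] (2::nat) \<otimes> b) \<otimes> (a [^] (2::nat) \<otimes> b) \<otimes> inv a =
    inv a \<otimes> (a [^] (2::nat) \<otimes> b) \<otimes> (a [^] (2::nat) \<otimes> b)"
proof -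
  have "(a [^] (2::nat) \<otimes> b) \<otimes> (a [^] (2::nat) \<otimes> b) \<otimes> inv a = b [^] (6::nat) \<otimes> a [^] (3::nat)"
    by (simp add: twisted_b_square inv_a del: nat_pow_Suc)
  also have "\<dots> = a [^] (3::nat) \<otimes> b [^] (6::nat)" using b_pow_even_a_pow[of 3 3] by simp
  also have "\<dots> = inv a \<otimes> ((a [^] (2::nat) \<otimes> b) \<otimes> (a [^] (2::nat) \<otimes> b))"
    by (simp add: twisted_b_square inv_a del: nat_pow_Suc)
  finally show ?thesis by (simp add: m_assoc)
qed

lemma twisted_lambda2_relations: "lambda2_relations G n (s + 8 * w) (inv a) (a [^] (2::nat) \<otimes> b) c"
proof -
  have a_cancel: "inv a \<otimes> (a \<otimes> x) = x" if "x \<in> carrier G" for x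
    using that by (simp add: m_assoc[symmetric])
  have a2: "a [^] (2::nat) = a \<otimes> a" by (simp add: numeral_2_eq_2)
  have "inv a [^] (4::nat) = \<one>" by (simp add: nat_pow_inv a_pow_4)
  moreover have "(a [^] (2::nat) \<otimes> b) [^] (8::nat) = \<one>"
    using twisted_b_pow_even[of 4] b_pow_mod[of 24] by simp
  moreover have "inv a \<otimes> (a [^] (2::nat) \<otimes> b) \<otimes> inv a \<otimes> (a [^] (2::nat) \<otimes> b) = \<one>"
    using abab by (simp add: a2 m_assoc a_cancel)
  moreover have "inv a \<otimes> (a [^] (2::nat) \<otimes> b) \<otimes> c \<otimes> inv a \<otimes> (a [^] (2::nat) \<otimes> b) \<otimes> c = \<one>"
    using abcabc by (simp add: a2 m_assoc a_cancel)
  moreover have "c \<otimes> (a [^] (2::nat) \<otimes> b) \<otimes> (a [^] (2::nat) \<otimes> b) =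
      (a [^] (2::nat) \<otimes> b) \<otimes> (a [^] (2::nat) \<otimes> b) \<otimes> c [^] (s + 8 * w)"
    by (simp only: twisted_cbb m_assoc nat_pow_mult closed_simps)
  ultimately show ?thesis
    using c_pow_n twisted_bcbc twisted_bba unfolding lambda2_relations_def by blast
qed

lemma c_conj_a_square: "c \<otimes> a [^] (2::nat) \<otimes> inv c = a [^] (2::nat) \<otimes> b [^] (4::nat)"
  by (simp add: c_a_square m_assoc)

lemma c_conj_b_pow_4: "c \<otimes> b [^] (4::nat) \<otimes> inv c = b [^] (4::nat) \<otimes> c [^] (8 * w)"
proof -
  have c_b4: "c \<otimes> b [^] (4::nat) = b [^] (4::nat) \<otimes> c [^] (s ^ 2)"
    using c_pow_b_pow_even[of 1 2] by simp
  have "c \<otimes> b [^] (4::nat) \<otimes> inv c = b [^] (4::nat) \<otimes> c [^] (s ^ 2) \<otimes> c [^] (n - 1)"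
    by (simp only: c_b4 inv_c)
  also have "\<dots> = b [^] (4::nat) \<otimes> c [^] (s ^ 2 + (n - 1))"
    by (simp only: m_assoc nat_pow_mult closed_simps)
  finally show ?thesis by (simp only: c_pow_s_square)
qed

end

section \<open>Tightness and chirality\<close>

locale lambda2_group_exact = lambda2_group +
  assumes generate_gens: "generate G {a, b, c} = carrier G"
    and nf_inj: "inj_on (\<lambda>(i, j, k). nf i j k) ({..<4} \<times> {..<8} \<times> {..<16 * w})"
begin

lemma nf_eq_iff:
  "nf i j k = nf i' j' k' \<longleftrightarrow> i mod 4 = i' mod 4 \<and> j mod 8 = j' mod 8 \<and> k mod n = k' mod n"
proof
  assume "nf i j k = nf i' j' k'"
  then have "nf (i mod 4) (j mod 8) (k mod n) = nf (i' mod 4) (j' mod 8) (k' mod n)"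
    by (simp only: nf_mod)
  then show "i mod 4 = i' mod 4 \<and> j mod 8 = j' mod 8 \<and> k mod n = k' mod n"
    using inj_onD[OF nf_inj] w_pos by fastforce
qed (metis nf_mod)

lemma carrier_eq_nf_image:
  "carrier G = (\<lambda>(i, j, k). nf i j k) ` ({..<4} \<times> {..<8} \<times> {..<n})"
proof
  show "carrier G \<subseteq> (\<lambda>(i, j, k). nf i j k) ` ({..<4} \<times> {..<8} \<times> {..<n})"
  proof
    fix x
    assume "x \<in> carrier G"
    then obtain i j k where "x = nf i j k"
      using generate_gens generate_subset_nf by blast
    then have "x = nf (i mod 4) (j mod 8) (k mod n)" by (simp add: nf_mod)
    moreover have "(i mod 4, j mod 8, k mod n) \<in> {..<4} \<times> {..<8} \<times> {..<n}" using w_pos by auto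
    ultimately show "x \<in> (\<lambda>(i, j, k). nf i j k) ` ({..<4} \<times> {..<8} \<times> {..<n})" by force
  qed
qed auto

lemma finite_carrier: "finite (carrier G)"
  by (simp add: carrier_eq_nf_image)

lemma order_eq: "order G = 32 * n"
  unfolding order_def carrier_eq_nf_image
  by (simp add: card_image[OF nf_inj] card_cartesian_product)

lemma a_pow_eq_one_iff: "a [^] (k::nat) = \<one> \<longleftrightarrow> 4 dvd k"
  using nf_eq_iff[of k 0 0 0 0 0] by (simp add: nf_def dvd_eq_mod_eq_0)

lemma b_pow_eq_one_iff: "b [^] (k::nat) = \<one> \<longleftrightarrow> 8 dvd k"
  using nf_eq_iff[of 0 k 0 0 0 0] by (simp add: nf_def dvd_eq_mod_eq_0)

lemma c_pow_eq_one_iff: "c [^] (k::nat) = \<one> \<longleftrightarrow> n dvd k"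
  using nf_eq_iff[of 0 0 k 0 0 0] by (simp add: nf_def dvd_eq_mod_eq_0)

lemma ord_a: "ord a = 4"
  by (simp add: ord_unique a_pow_eq_one_iff)

lemma ord_b: "ord b = 8"
  by (simp add: ord_unique b_pow_eq_one_iff)

lemma ord_c: "ord c = n"
  by (simp add: ord_unique c_pow_eq_one_iff)

lemma c_pow_8w_ne_one: "c [^] (8 * w) \<noteq> \<one>"
  using w_pos by (simp add: c_pow_eq_one_iff)

lemma generate_singleton_subset_powers:
  assumes "x \<in> {a, b, c}"
  shows "generate G {x} \<subseteq> {x [^] (i::nat) | i. True}"
proof (rule generate_subset_right_mult_closed)
  show "\<exists>k::nat. inv g = g [^] k" if "g \<in> {x}" for g
    using that assms inv_a inv_b inv_c by blast
  show "\<one> \<in> {x [^] (i::nat) | i. True}" by (metis (mono_tags) CollectI nat_pow_0)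
  show "y \<otimes> g \<in> {x [^] (i::nat) | i. True}"
    if y: "y \<in> {x [^] (i::nat) | i. True}" and g: "g \<in> {x}" for y g
  proof -
    obtain i where "y = x [^] (i::nat)" using y by blast
    then have "y \<otimes> g = x [^] Suc i" using g by simp
    then show ?thesis by blast
  qed
qed (use assms in auto)

lemma generate_ab_subset: "generate G {a, b} \<subseteq> {a [^] (i::nat) \<otimes> b [^] (j::nat) | i j. True}"
proof (rule generate_subset_right_mult_closed)
  show "\<exists>k::nat. inv g = g [^] k" if "g \<in> {a, b}" for g
    using that inv_a inv_b by blast
  show "\<one> \<in> {a [^] (i::nat) \<otimes> b [^] (j::nat) | i j. True}"
    by (rule CollectI, rule exI[of _ 0], rule exI[of _ 0]) simp
  show "x \<otimes> g \<in> {a [^] (i::nat) \<otimes> b [^] (j::nat) | i j. True}"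
    if x_in: "x \<in> {a [^] (i::nat) \<otimes> b [^] (j::nat) | i j. True}" and g: "g \<in> {a, b}" for x g
  proof -
    obtain i j where x: "x = a [^] (i::nat) \<otimes> b [^] (j::nat)" using x_in by blast
    obtain i' j' where e: "b [^] j \<otimes> a = a [^] (i'::nat) \<otimes> b [^] (j'::nat)"
      using b_pow_a_exchange by blast
    have "x \<otimes> a = a [^] (i + i') \<otimes> b [^] j'" by (simp add: x m_assoc e nat_pow_mult_assoc)
    moreover have "x \<otimes> b = a [^] i \<otimes> b [^] Suc j" by (simp add: x m_assoc)
    ultimately show ?thesis using g by blast
  qed
qed auto

lemma generate_bc_subset: "generate G {b, c} \<subseteq> {b [^] (j::nat) \<otimes> c [^] (k::nat) | j k. True}"
proof (rule generate_subset_right_mult_closed)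
  show "\<exists>k::nat. inv g = g [^] k" if "g \<in> {b, c}" for g
    using that inv_b inv_c by blast
  show "\<one> \<in> {b [^] (j::nat) \<otimes> c [^] (k::nat) | j k. True}"
    by (rule CollectI, rule exI[of _ 0], rule exI[of _ 0]) simp
  show "x \<otimes> g \<in> {b [^] (j::nat) \<otimes> c [^] (k::nat) | j k. True}"
    if x_in: "x \<in> {b [^] (j::nat) \<otimes> c [^] (k::nat) | j k. True}" and g: "g \<in> {b, c}" for x g
  proof -
    obtain j k where x: "x = b [^] (j::nat) \<otimes> c [^] (k::nat)" using x_in by blast
    obtain j' l where e: "c [^] k \<otimes> b = b [^] (j'::nat) \<otimes> c [^] (l::nat)"
      using c_pow_b_exchange by blast
    have "x \<otimes> b = b [^] (j + j') \<otimes> c [^] l" by (simp add: x m_assoc e nat_pow_mult_assoc)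
    moreover have "x \<otimes> c = b [^] j \<otimes> c [^] Suc k" by (simp add: x m_assoc)
    ultimately show ?thesis using g by blast
  qed
qed auto

lemma generate_a_inter_b: "generate G {a} \<inter> generate G {b} = {\<one>}"
proof
  show "generate G {a} \<inter> generate G {b} \<subseteq> {\<one>}"
  proof
    fix x
    assume "x \<in> generate G {a} \<inter> generate G {b}"
    then obtain i j :: nat where x: "x = a [^] i" "x = b [^] j"
      using generate_singleton_subset_powers[of a] generate_singleton_subset_powers[of b] by blast
    then have "nf i 0 0 = nf 0 j 0" by (simp add: nf_def)
    then show "x \<in> {\<one>}" using x by (simp add: nf_eq_iff a_pow_eq_one_iff dvd_eq_mod_eq_0)
  qed
qed (auto intro: generate.one)

lemma generate_b_inter_c: "generate G {b} \<inter> generate G {c} = {\<one>}"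
proof
  show "generate G {b} \<inter> generate G {c} \<subseteq> {\<one>}"
  proof
    fix x
    assume "x \<in> generate G {b} \<inter> generate G {c}"
    then obtain j k :: nat where x: "x = b [^] j" "x = c [^] k"
      using generate_singleton_subset_powers[of b] generate_singleton_subset_powers[of c] by blast
    then have "nf 0 j 0 = nf 0 0 k" by (simp add: nf_def)
    then show "x \<in> {\<one>}" using x by (simp add: nf_eq_iff b_pow_eq_one_iff dvd_eq_mod_eq_0)
  qed
qed (auto intro: generate.one)

lemma generate_ab_inter_bc: "generate G {a, b} \<inter> generate G {b, c} = generate G {b}"
proof
  show "generate G {a, b} \<inter> generate G {b, c} \<subseteq> generate G {b}"
  proof
    fix x
    assume "x \<in> generate G {a, b} \<inter> generate G {b, c}"
    then obtain i j j' k :: nat where x: "x = a [^] i \<otimes> b [^] j" "x = b [^] j' \<otimes> c [^] k"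
      using generate_ab_subset generate_bc_subset by blast
    then have "nf i j 0 = nf 0 j' k" by (simp add: nf_def)
    then have "a [^] i = \<one>" by (simp add: nf_eq_iff a_pow_eq_one_iff dvd_eq_mod_eq_0)
    then have "x = b [^] j \<otimes> c [^] (0::nat)" using x(1) by simp
    then show "x \<in> generate G {b}"
      using generate_pow_nat[of b] ord_b by (auto simp: image_iff)
  qed
qed (simp add: mono_generate)

lemma rot_group4_gens: "rot_group4 G a b c"
proof -
  have "a \<noteq> \<one>" "b \<noteq> \<one>" "c \<noteq> \<one>"
    using a_pow_eq_one_iff[of 1] b_pow_eq_one_iff[of 1] c_pow_eq_one_iff[of 1] w_pos by auto
  then show ?thesis
    unfolding rot_group4_def
    using generate_gens generate_a_inter_b generate_b_inter_c generate_ab_inter_bc abab bcbc abcabc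
    by (simp add: numeral_2_eq_2 m_assoc is_group)
qed

text \<open>An automorphism realising the mirror image would carry the relation \<open>c b\<^sup>2 = b\<^sup>2 c\<^sup>s\<close>
  to the twisted one, forcing \<open>c\<^sup>8\<^sup>w = \<one>\<close>.\<close>

lemma chiral4_gens: "chiral4 G a b c"
proof -
  have "\<not> (\<exists>\<phi>. \<phi> \<in> iso G G \<and> \<phi> a = inv a \<and> \<phi> b = a \<otimes> a \<otimes> b \<and> \<phi> c = c)"
  proof
    assume "\<exists>\<phi>. \<phi> \<in> iso G G \<and> \<phi> a = inv a \<and> \<phi> b = a \<otimes> a \<otimes> b \<and> \<phi> c = c"
    then obtain \<phi> where \<phi>: "\<phi> \<in> hom G G" "\<phi> b = a [^] (2::nat) \<otimes> b" "\<phi> c = c"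
      by (auto simp: iso_def numeral_2_eq_2)
    interpret \<phi>: group_hom G G \<phi> by unfold_locales (rule \<phi>(1))
    have "lambda2_relations G n s (\<phi> a) (\<phi> b) (\<phi> c)"
      by (rule \<phi>.lambda2_relations_image[OF _ _ _ relations]) simp_all
    then have "c \<otimes> (a [^] (2::nat) \<otimes> b) \<otimes> (a [^] (2::nat) \<otimes> b) =
        (a [^] (2::nat) \<otimes> b) \<otimes> (a [^] (2::nat) \<otimes> b) \<otimes> c [^] s"
      using \<phi> by (simp add: lambda2_relations_def)
    moreover have "c \<otimes> (a [^] (2::nat) \<otimes> b) \<otimes> (a [^] (2::nat) \<otimes> b) =
        (a [^] (2::nat) \<otimes> b) \<otimes> (a [^] (2::nat) \<otimes> b) \<otimes> c [^] (s + 8 * w)"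
      using twisted_lambda2_relations unfolding lambda2_relations_def by blast
    ultimately have "c [^] s = c [^] (s + 8 * w)"
      using l_cancel[of "(a [^] (2::nat) \<otimes> b) \<otimes> (a [^] (2::nat) \<otimes> b)" "c [^] s" "c [^] (s + 8 * w)"]
      by simp
    moreover have "c [^] s \<otimes> c [^] (8 * w) = c [^] (s + 8 * w)" by (rule nat_pow_mult) simp
    ultimately have "c [^] s \<otimes> \<one> = c [^] s \<otimes> c [^] (8 * w)"
      by (metis r_one nat_pow_closed gens_closed(3))
    then have "c [^] (8 * w) = \<one>"
      using l_cancel[of "c [^] s" \<one> "c [^] (8 * w)"] by simp
    then show False using c_pow_8w_ne_one by contradiction
  qed
  then show ?thesis using rot_group4_gens by (simp add: chiral4_def)
qed

lemma tight_chiral4_gens: "tight_chiral4 G a b c"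
  using chiral4_gens finite_carrier order_eq ord_a ord_b ord_c by (simp add: tight_chiral4_def)

end

section \<open>Atomicity\<close>

lemma (in normal) r_coset_eq_one_iff:
  "x \<in> carrier G \<Longrightarrow> H #> x = \<one>\<^bsub>G Mod H\<^esub> \<longleftrightarrow> x \<in> H"
  using coset_join1[of H x] coset_join2[of x H] subgroup_axioms by auto

definition (in group) ord_mod :: "'a set \<Rightarrow> 'a \<Rightarrow> nat" where
  "ord_mod N x = group.ord (G Mod N) (N #> x)"

lemma (in normal) pow_mem_iff_ord_mod_dvd:
  assumes "x \<in> carrier G"
  shows "x [^] (k::nat) \<in> H \<longleftrightarrow> ord_mod H x dvd k"
proof -
  interpret Q: group "G Mod H" by (rule factorgroup_is_group)
  have "x [^] k \<in> H \<longleftrightarrow> H #> x [^] k = \<one>\<^bsub>G Mod H\<^esub>"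
    using r_coset_eq_one_iff[of "x [^] k"] assms by simp
  also have "\<dots> \<longleftrightarrow> (H #> x) [^]\<^bsub>G Mod H\<^esub> k = \<one>\<^bsub>G Mod H\<^esub>"
    by (simp add: FactGroup_pow assms)
  also have "\<dots> \<longleftrightarrow> ord_mod H x dvd k"
    unfolding ord_mod_def using assms by (intro Q.pow_eq_id) (auto simp: carrier_FactGroup)
  finally show ?thesis .
qed

lemma (in normal) card_mult_order_FactGroup: "card H * order (G Mod H) = order G"
  using lagrange[OF subgroup_axioms] by (simp add: order_def FactGroup_def mult.commute)

lemma card_multiples_below:
  fixes d m :: nat
  assumes "0 < d" "d dvd m"
  shows "card {i. i < m \<and> d dvd i} = m div d"
proof -
  have "{i. i < m \<and> d dvd i} = (\<lambda>t. d * t) ` {..<m div d}"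
  proof
    show "{i. i < m \<and> d dvd i} \<subseteq> (\<lambda>t. d * t) ` {..<m div d}"
    proof
      fix i
      assume "i \<in> {i. i < m \<and> d dvd i}"
      then obtain t where "i = d * t" "d * t < m" by (auto elim: dvdE)
      moreover have "t < m div d"
        using calculation assms by (metis dvd_mult_div_cancel mult_less_cancel1)
      ultimately show "i \<in> (\<lambda>t. d * t) ` {..<m div d}" by auto
    qed
    show "(\<lambda>t. d * t) ` {..<m div d} \<subseteq> {i. i < m \<and> d dvd i}"
    proof
      fix i
      assume "i \<in> (\<lambda>t. d * t) ` {..<m div d}"
      then obtain t where t: "i = d * t" "t < m div d" by auto
      have "d * t < d * (m div d)" using t(2) assms(1) by (rule mult_strict_left_mono)
      also have "d * (m div d) = m" using assms by simp
      finally show "i \<in> {i. i < m \<and> d dvd i}" using t by simp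
    qed
  qed
  moreover have "inj_on (\<lambda>t. d * t) {..<m div d}" using assms by (auto simp: inj_on_def)
  ultimately show ?thesis by (simp add: card_image)
qed

lemma dvd_two_pow_less:
  fixes d :: nat
  assumes "d dvd 2 ^ Suc m" "d < 2 ^ Suc m"
  shows "d dvd 2 ^ m"
proof -
  obtain i where i: "i \<le> Suc m" "d = 2 ^ i"
    using assms(1) divides_primepow_nat[OF two_is_prime_nat] by blast
  then have "i \<le> m" using assms(2) by (cases "i = Suc m") auto
  then show ?thesis using i by (simp add: le_imp_power_dvd)
qed

lemma even_if_dvd_two_pow:
  fixes d :: nat
  assumes "d dvd 2 ^ m" "d \<noteq> 1"
  shows "even d"
proof -
  obtain i where "i \<le> m" "d = 2 ^ i"
    using assms(1) divides_primepow_nat[OF two_is_prime_nat] by blast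
  then show ?thesis using assms(2) by (cases i) simp_all
qed

lemma (in group) iso_of_hom_involutive_on_generators:
  assumes \<phi>: "\<phi> \<in> hom G G" and S: "S \<subseteq> carrier G" "generate G S = carrier G"
    and invol: "\<And>x. x \<in> S \<Longrightarrow> \<phi> (\<phi> x) = x"
  shows "\<phi> \<in> iso G G"
proof -
  interpret \<phi>: group_hom G G \<phi> by unfold_locales (rule \<phi>)
  have \<phi>\<phi>: "\<phi> (\<phi> x) = x" if "x \<in> generate G S" for x
    using that
  proof (induction rule: generate.induct)
    case one
    then show ?case by simp
  next
    case (incl h)
    then show ?case by (rule invol)
  next
    case (inv h)
    then have "h \<in> carrier G" using S(1) by blast
    then show ?case using invol[OF inv] by (simp add: \<phi>.hom_inv)
  next
    case (eng h1 h2)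
    then have "h1 \<in> carrier G" "h2 \<in> carrier G"
      using generate_in_carrier[OF S(1)] by blast+
    then show ?case using eng.IH by simp
  qed
  have "bij_betw \<phi> (carrier G) (carrier G)"
    by (rule bij_betw_byWitness[where f' = \<phi>]) (use \<phi>\<phi> S(2) in \<open>auto simp: image_subset_iff\<close>)
  then show ?thesis using \<phi> by (simp add: iso_def)
qed

context lambda2_group
begin

lemma twisted_relations_mod:
  assumes N: "N \<lhd> G" and central: "c [^] (8 * w) \<in> N"
  shows "lambda2_relations (G Mod N) n s (N #> inv a) (N #> (a [^] (2::nat) \<otimes> b)) (N #> c)"
proof -
  interpret N: normal N G by (rule N)
  interpret \<pi>: group_hom G "G Mod N" "\<lambda>x. N #> x"
    using N.factorgroup_is_group N.r_coset_hom_Mod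
    by (simp add: group_hom_def group_hom_axioms_def is_group)
  have central_one: "N #> c [^] (8 * w) = \<one>\<^bsub>G Mod N\<^esub>"
    using central N.r_coset_eq_one_iff[of "c [^] (8 * w)"] by simp
  have "(N #> c) [^]\<^bsub>G Mod N\<^esub> (s + 8 * w) = (N #> c [^] s) \<otimes>\<^bsub>G Mod N\<^esub> (N #> c [^] (8 * w))"
    by (simp only: \<pi>.hom_nat_pow[symmetric] \<pi>.hom_mult[symmetric] nat_pow_mult closed_simps)
  also have "\<dots> = (N #> c) [^]\<^bsub>G Mod N\<^esub> s"
    by (simp only: central_one \<pi>.hom_nat_pow[symmetric] closed_simps)
      (rule monoid.r_one[OF group.is_monoid[OF N.factorgroup_is_group] \<pi>.hom_closed], simp)
  finally have exponent: "(N #> c) [^]\<^bsub>G Mod N\<^esub> (s + 8 * w) = (N #> c) [^]\<^bsub>G Mod N\<^esub> s" .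
  have "lambda2_relations (G Mod N) n (s + 8 * w) (N #> inv a) (N #> (a [^] (2::nat) \<otimes> b)) (N #> c)"
    by (rule \<pi>.lambda2_relations_image[OF _ _ _ twisted_lambda2_relations]) simp_all
  then show ?thesis by (simp only: lambda2_relations_def exponent)
qed

end

lemma (in lambda2_group) ord_mod_dvd:
  assumes "N \<lhd> G"
  shows "ord_mod N a dvd 4" "ord_mod N b dvd 8" "ord_mod N c dvd n"
proof -
  interpret N: normal N G by fact
  show "ord_mod N a dvd 4" "ord_mod N b dvd 8" "ord_mod N c dvd n"
    using N.pow_mem_iff_ord_mod_dvd[of a 4] N.pow_mem_iff_ord_mod_dvd[of b 8]
      N.pow_mem_iff_ord_mod_dvd[of c n] a_pow_4 b_pow_8 c_pow_n N.one_closed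
    by simp_all
qed

context lambda2_group_exact
begin

text \<open>Counting argument: a normal subgroup \<open>N\<close> with tight quotient contains
  \<open>\<langle>a\<^sup>d\<^sup>a\<rangle>\<langle>b\<^sup>d\<^sup>b\<rangle>\<langle>c\<^sup>d\<^sup>c\<rangle>\<close>, with \<open>da, db, dc\<close> the orders of the images of the generators, and has
  the same cardinality.\<close>

lemma nf_multiples_eq_normal:
  assumes N: "N \<lhd> G" and tight: "order (G Mod N) = ord_mod N a * ord_mod N b * ord_mod N c"
  shows "(\<lambda>(i, j, k). nf i j k) ` ({i. i < 4 \<and> ord_mod N a dvd i} \<times> {j. j < 8 \<and> ord_mod N b dvd j} \<times>
    {k. k < n \<and> ord_mod N c dvd k}) = N" (is "(\<lambda>(i, j, k). nf i j k) ` ?I = N")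
proof -
  interpret N: normal N G by (rule N)
  define da db dc where "da = ord_mod N a" and "db = ord_mod N b" and "dc = ord_mod N c"
  have dvd: "da dvd 4" "db dvd 8" "dc dvd n" using ord_mod_dvd[OF N] by (simp_all add: da_def db_def dc_def)
  then have pos: "0 < da" "0 < db" "0 < dc" using w_pos by (auto intro: Nat.gr0I)
  have sub: "(\<lambda>(i, j, k). nf i j k) ` ?I \<subseteq> N"
    using N.pow_mem_iff_ord_mod_dvd[of a] N.pow_mem_iff_ord_mod_dvd[of b] N.pow_mem_iff_ord_mod_dvd[of c]
    by (auto simp: nf_def N.m_closed)
  have "card ((\<lambda>(i, j, k). nf i j k) ` ?I) = (4 div da) * (8 div db) * (n div dc)"
    by (subst card_image[OF inj_on_subset[OF nf_inj]])
      (auto simp: card_cartesian_product card_multiples_below pos dvd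
        da_def[symmetric] db_def[symmetric] dc_def[symmetric])
  then have "card ((\<lambda>(i, j, k). nf i j k) ` ?I) * (da * db * dc) =
      ((4 div da) * da) * ((8 div db) * db) * ((n div dc) * dc)"
    by (simp add: ac_simps)
  also have "\<dots> = card N * (da * db * dc)"
    using dvd N.card_mult_order_FactGroup tight order_eq by (simp add: da_def db_def dc_def ac_simps)
  finally have "card ((\<lambda>(i, j, k). nf i j k) ` ?I) = card N" using pos by simp
  moreover have "finite N" using finite_carrier N.subset finite_subset by blast
  ultimately show ?thesis using sub by (simp add: card_subset_eq)
qed

lemma nf_mem_normal_iff:
  assumes N: "N \<lhd> G" and tight: "order (G Mod N) = ord_mod N a * ord_mod N b * ord_mod N c"
    and ijk: "i < 4" "j < 8" "k < n"
  shows "nf i j k \<in> N \<longleftrightarrow> ord_mod N a dvd i \<and> ord_mod N b dvd j \<and> ord_mod N c dvd k"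
proof
  assume "nf i j k \<in> N"
  then have "nf i j k \<in> (\<lambda>(i, j, k). nf i j k) ` ({i. i < 4 \<and> ord_mod N a dvd i} \<times>
      {j. j < 8 \<and> ord_mod N b dvd j} \<times> {k. k < n \<and> ord_mod N c dvd k})"
    by (subst nf_multiples_eq_normal[OF N tight])
  then obtain i' j' k' where "i' < 4" "ord_mod N a dvd i'" "j' < 8" "ord_mod N b dvd j'"
      "k' < n" "ord_mod N c dvd k'" "nf i j k = nf i' j' k'"
    by auto
  then show "ord_mod N a dvd i \<and> ord_mod N b dvd j \<and> ord_mod N c dvd k"
    using inj_onD[OF nf_inj, of "(i, j, k)" "(i', j', k')"] ijk by auto
next
  assume "ord_mod N a dvd i \<and> ord_mod N b dvd j \<and> ord_mod N c dvd k"
  then have "nf i j k \<in> (\<lambda>(i, j, k). nf i j k) ` ({i. i < 4 \<and> ord_mod N a dvd i} \<times>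
      {j. j < 8 \<and> ord_mod N b dvd j} \<times> {k. k < n \<and> ord_mod N c dvd k})"
    using ijk by (intro image_eqI[where x = "(i, j, k)"]) auto
  then show "nf i j k \<in> N" by (subst (asm) nf_multiples_eq_normal[OF N tight])
qed

text \<open>Conjugation by \<open>c\<close> pushes \<open>a\<^sup>2\<close> and \<open>b\<^sup>4\<close> down to the central involution \<open>c\<^sup>8\<^sup>w\<close>.\<close>

lemma a_square_mem_normal_imp:
  assumes N: "N \<lhd> G" and tight: "order (G Mod N) = ord_mod N a * ord_mod N b * ord_mod N c"
    and "a [^] (2::nat) \<in> N"
  shows "b [^] (4::nat) \<in> N"
proof -
  interpret N: normal N G by (rule N)
  have "c \<otimes> a [^] (2::nat) \<otimes> inv c \<in> N" using assms(3) by (simp add: N.inv_op_closed2)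
  then have "nf 2 4 0 \<in> N" by (simp add: c_conj_a_square nf_def)
  then have "ord_mod N b dvd 4" using nf_mem_normal_iff[OF N tight, of 2 4 0] w_pos by simp
  then show ?thesis using N.pow_mem_iff_ord_mod_dvd[of b 4] by simp
qed

lemma b_pow_4_mem_normal_imp:
  assumes N: "N \<lhd> G" and tight: "order (G Mod N) = ord_mod N a * ord_mod N b * ord_mod N c"
    and "b [^] (4::nat) \<in> N"
  shows "c [^] (8 * w) \<in> N"
proof -
  interpret N: normal N G by (rule N)
  have "c \<otimes> b [^] (4::nat) \<otimes> inv c \<in> N" using assms(3) by (simp add: N.inv_op_closed2)
  then have "nf 0 4 (8 * w) \<in> N" by (simp add: c_conj_b_pow_4 nf_def)
  then have "ord_mod N c dvd 8 * w" using nf_mem_normal_iff[OF N tight, of 0 4 "8 * w"] w_pos by simp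
  then show ?thesis using N.pow_mem_iff_ord_mod_dvd[of c "8 * w"] by simp
qed

lemma tight_quotient_order:
  "tight_chiral4 (G Mod N) (N #> a) (N #> b) (N #> c) \<Longrightarrow>
    order (G Mod N) = ord_mod N a * ord_mod N b * ord_mod N c"
  by (simp add: tight_chiral4_def ord_mod_def)

end

locale lambda2_presentation = lambda2_group_exact +
  assumes w_power_of_two: "\<exists>e. w = 2 ^ e"
    and universal: "\<And>(H :: 'a set monoid) x y z. group H \<Longrightarrow>
      x \<in> carrier H \<Longrightarrow> y \<in> carrier H \<Longrightarrow> z \<in> carrier H \<Longrightarrow>
      lambda2_relations H (16 * w) (1 + 4 * w * u) x y z \<Longrightarrow>
      \<exists>\<psi> \<in> hom G H. \<psi> a = x \<and> \<psi> b = y \<and> \<psi> c = z"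
begin

lemma c_pow_8w_mem_normal:
  assumes N: "N \<lhd> G" "N \<noteq> {\<one>}"
    and tight: "order (G Mod N) = ord_mod N a * ord_mod N b * ord_mod N c"
  shows "c [^] (8 * w) \<in> N"
proof -
  interpret N: normal N G by (rule N(1))
  note dvd = ord_mod_dvd[OF N(1)]
  obtain x where x: "x \<in> N" "x \<noteq> \<one>" using N(2) N.one_closed by auto
  then have "x \<in> (\<lambda>(i, j, k). nf i j k) ` ({i. i < 4 \<and> ord_mod N a dvd i} \<times>
      {j. j < 8 \<and> ord_mod N b dvd j} \<times> {k. k < n \<and> ord_mod N c dvd k})"
    by (subst nf_multiples_eq_normal[OF N(1) tight])
  then obtain i j k where ijk: "i < 4" "j < 8" "k < n" and x_nf: "x = nf i j k"
    and divides: "ord_mod N a dvd i" "ord_mod N b dvd j" "ord_mod N c dvd k"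
    by auto
  have "\<not> (i = 0 \<and> j = 0 \<and> k = 0)"
  proof
    assume "i = 0 \<and> j = 0 \<and> k = 0"
    then show False using x(2) x_nf by (simp add: nf_def)
  qed
  then consider "0 < i" | "0 < j" | "0 < k" by auto
  then show ?thesis
  proof cases
    case 1
    then have "ord_mod N a < 2 ^ Suc 1" using divides(1) ijk(1) dvd_imp_le[of "ord_mod N a" i] by simp
    with dvd(1) have "ord_mod N a dvd 2" using dvd_two_pow_less[of "ord_mod N a" 1] by simp
    then have "a [^] (2::nat) \<in> N" using N.pow_mem_iff_ord_mod_dvd[of a 2] by simp
    then show ?thesis by (intro b_pow_4_mem_normal_imp[OF N(1) tight] a_square_mem_normal_imp[OF N(1) tight])
  next
    case 2
    then have "ord_mod N b < 2 ^ Suc 2" using divides(2) ijk(2) dvd_imp_le[of "ord_mod N b" j] by simp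
    with dvd(2) have "ord_mod N b dvd 4" using dvd_two_pow_less[of "ord_mod N b" 2] by simp
    then have "b [^] (4::nat) \<in> N" using N.pow_mem_iff_ord_mod_dvd[of b 4] by simp
    then show ?thesis by (rule b_pow_4_mem_normal_imp[OF N(1) tight])
  next
    case 3
    obtain e where e: "w = 2 ^ e" using w_power_of_two by blast
    have n_eq: "n = 2 ^ Suc (e + 3)" by (simp add: e power_add)
    have "ord_mod N c < 2 ^ Suc (e + 3)" using 3 divides(3) ijk(3) n_eq dvd_imp_le[of "ord_mod N c" k] by simp
    with dvd(3) n_eq have "ord_mod N c dvd 2 ^ (e + 3)" using dvd_two_pow_less[of "ord_mod N c" "e + 3"] by simp
    then have "ord_mod N c dvd 8 * w" by (simp add: e power_add mult.commute)
    then show ?thesis using N.pow_mem_iff_ord_mod_dvd[of c "8 * w"] by simp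
  qed
qed

lemma mirror_hom_mod:
  assumes N: "N \<lhd> G" "N \<noteq> {\<one>}"
    and tight: "order (G Mod N) = ord_mod N a * ord_mod N b * ord_mod N c"
  obtains \<psi> where "\<psi> \<in> hom G (G Mod N)" "\<psi> a = N #> inv a" "\<psi> b = N #> (a [^] (2::nat) \<otimes> b)"
    "\<psi> c = N #> c"
proof -
  interpret N: normal N G by (rule N(1))
  interpret \<pi>: group_hom G "G Mod N" "\<lambda>x. N #> x"
    using N.factorgroup_is_group N.r_coset_hom_Mod
    by (simp add: group_hom_def group_hom_axioms_def is_group)
  have "lambda2_relations (G Mod N) n s (N #> inv a) (N #> (a [^] (2::nat) \<otimes> b)) (N #> c)"
    by (rule twisted_relations_mod[OF N(1) c_pow_8w_mem_normal[OF N tight]])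
  moreover have "N #> inv a \<in> carrier (G Mod N)" "N #> (a [^] (2::nat) \<otimes> b) \<in> carrier (G Mod N)"
    "N #> c \<in> carrier (G Mod N)"
    by (simp_all only: \<pi>.hom_closed closed_simps)
  ultimately show thesis
    using universal[OF N.factorgroup_is_group] that by blast
qed

lemma mirror_hom_kills_normal:
  assumes N: "N \<lhd> G" and tight: "order (G Mod N) = ord_mod N a * ord_mod N b * ord_mod N c"
    and "b \<notin> N"
    and \<psi>: "\<psi> \<in> hom G (G Mod N)" "\<psi> a = N #> inv a" "\<psi> b = N #> (a [^] (2::nat) \<otimes> b)"
      "\<psi> c = N #> c"
  shows "N \<subseteq> kernel G (G Mod N) \<psi>"
proof
  interpret N: normal N G by (rule N)
  interpret \<pi>: group_hom G "G Mod N" "\<lambda>x. N #> x"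
    using N.factorgroup_is_group N.r_coset_hom_Mod
    by (simp add: group_hom_def group_hom_axioms_def is_group)
  interpret \<psi>: group_hom G "G Mod N" \<psi>
    using N.factorgroup_is_group \<psi>(1) by (simp add: group_hom_def group_hom_axioms_def is_group)
  have "ord_mod N b \<noteq> 1" using N.pow_mem_iff_ord_mod_dvd[of b 1] \<open>b \<notin> N\<close> by auto
  moreover have "ord_mod N b dvd 2 ^ 3" using ord_mod_dvd[OF N] by simp
  ultimately have "even (ord_mod N b)" by (intro even_if_dvd_two_pow)
  fix x
  assume "x \<in> N"
  then have "x \<in> (\<lambda>(i, j, k). nf i j k) ` ({i. i < 4 \<and> ord_mod N a dvd i} \<times>
      {j. j < 8 \<and> ord_mod N b dvd j} \<times> {k. k < n \<and> ord_mod N c dvd k})"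
    by (subst nf_multiples_eq_normal[OF N tight])
  then obtain i j k where x: "x = nf i j k"
    and divides: "ord_mod N a dvd i" "ord_mod N b dvd j" "ord_mod N c dvd k"
    by auto
  have "even j" using \<open>even (ord_mod N b)\<close> divides(2) by (rule dvd_trans)
  then obtain m where j: "j = 2 * m" by (rule evenE)
  have "ord_mod N b dvd 3 * (2 * m)" using divides(2) j by (simp only: dvd_mult)
  then have "b [^] (6 * m) \<in> N" using N.pow_mem_iff_ord_mod_dvd[of b "6 * m"] by simp
  moreover have "a [^] i \<in> N" "c [^] k \<in> N"
    using N.pow_mem_iff_ord_mod_dvd[of a i] N.pow_mem_iff_ord_mod_dvd[of c k] divides by simp_all
  ultimately have "inv a [^] i \<otimes> (a [^] (2::nat) \<otimes> b) [^] j \<otimes> c [^] k \<in> N"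
    by (simp add: j twisted_b_pow_even nat_pow_inv N.m_closed N.m_inv_closed)
  then have "N #> (inv a [^] i \<otimes> (a [^] (2::nat) \<otimes> b) [^] j \<otimes> c [^] k) = \<one>\<^bsub>G Mod N\<^esub>"
    using N.rcos_const[OF is_group] by simp
  moreover have "\<psi> x = \<psi> a [^]\<^bsub>G Mod N\<^esub> i \<otimes>\<^bsub>G Mod N\<^esub> \<psi> b [^]\<^bsub>G Mod N\<^esub> j \<otimes>\<^bsub>G Mod N\<^esub> \<psi> c [^]\<^bsub>G Mod N\<^esub> k"
    by (simp only: x nf_def \<psi>.hom_mult \<psi>.hom_nat_pow closed_simps)
  then have "\<psi> x = N #> (inv a [^] i \<otimes> (a [^] (2::nat) \<otimes> b) [^] j \<otimes> c [^] k)"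
    by (simp only: \<psi>(2-4) \<pi>.hom_mult[symmetric] \<pi>.hom_nat_pow[symmetric] closed_simps)
  ultimately show "x \<in> kernel G (G Mod N) \<psi>" using x by (simp add: kernel_def)
qed

lemma mirror_hom_involutive:
  assumes N: "N \<lhd> G"
    and \<psi>: "\<psi> \<in> hom G (G Mod N)" "\<psi> a = N #> inv a" "\<psi> b = N #> (a [^] (2::nat) \<otimes> b)"
      "\<psi> c = N #> c"
  shows "\<psi> (inv a) = N #> a" "\<psi> (a [^] (2::nat) \<otimes> b) = N #> b"
proof -
  interpret N: normal N G by (rule N)
  interpret \<pi>: group_hom G "G Mod N" "\<lambda>x. N #> x"
    using N.factorgroup_is_group N.r_coset_hom_Mod
    by (simp add: group_hom_def group_hom_axioms_def is_group)
  interpret \<psi>: group_hom G "G Mod N" \<psi>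
    using N.factorgroup_is_group \<psi>(1) by (simp add: group_hom_def group_hom_axioms_def is_group)
  show "\<psi> (inv a) = N #> a"
    by (simp only: \<psi>.hom_inv \<psi>(2) \<pi>.hom_inv[symmetric] inv_inv closed_simps)
  have "\<psi> (a [^] (2::nat) \<otimes> b) = N #> (inv a [^] (2::nat) \<otimes> (a [^] (2::nat) \<otimes> b))"
    by (simp only: \<psi>.hom_mult \<psi>.hom_nat_pow \<psi>(2,3) \<pi>.hom_mult[symmetric]
        \<pi>.hom_nat_pow[symmetric] closed_simps)
  also have "inv a [^] (2::nat) \<otimes> (a [^] (2::nat) \<otimes> b) = b"
    by (simp add: nat_pow_inv m_assoc[symmetric])
  finally show "\<psi> (a [^] (2::nat) \<otimes> b) = N #> b" .
qed

text \<open>If \<open>G/N\<close> were tight, the twisted generators would satisfy the defining relations in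
  \<open>G/N\<close>; the induced endomorphism of \<open>G/N\<close> is the forbidden mirror automorphism.\<close>

lemma mirror_automorphism_mod:
  assumes N: "N \<lhd> G" "N \<noteq> {\<one>}" and T: "tight_chiral4 (G Mod N) (N #> a) (N #> b) (N #> c)"
  obtains \<Phi> where "\<Phi> \<in> iso (G Mod N) (G Mod N)" "\<Phi> (N #> a) = inv\<^bsub>G Mod N\<^esub> (N #> a)"
    "\<Phi> (N #> b) = (N #> a) \<otimes>\<^bsub>G Mod N\<^esub> (N #> a) \<otimes>\<^bsub>G Mod N\<^esub> (N #> b)" "\<Phi> (N #> c) = N #> c"
proof -
  interpret N: normal N G by (rule N(1))
  interpret Q: group "G Mod N" by (rule N.factorgroup_is_group)
  interpret \<pi>: group_hom G "G Mod N" "\<lambda>x. N #> x"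
    using N.factorgroup_is_group N.r_coset_hom_Mod
    by (simp add: group_hom_def group_hom_axioms_def is_group)
  note tight = tight_quotient_order[OF T]
  have rot: "rot_group4 (G Mod N) (N #> a) (N #> b) (N #> c)"
    using T by (simp add: tight_chiral4_def chiral4_def)
  then have "b \<notin> N" using N.r_coset_eq_one_iff[of b] by (simp add: rot_group4_def)
  obtain \<psi> where \<psi>: "\<psi> \<in> hom G (G Mod N)" "\<psi> a = N #> inv a" "\<psi> b = N #> (a [^] (2::nat) \<otimes> b)"
      "\<psi> c = N #> c"
    by (rule mirror_hom_mod[OF N tight])
  interpret \<psi>: group_hom G "G Mod N" \<psi>
    using N.factorgroup_is_group \<psi>(1) by (simp add: group_hom_def group_hom_axioms_def is_group)
  obtain \<Phi> where \<Phi>: "\<Phi> \<in> hom (G Mod N) (G Mod N)" "\<And>x. x \<in> carrier G \<Longrightarrow> \<Phi> (N #> x) = \<psi> x"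
    using \<psi>.FactGroup_universal_kernel[OF N(1) mirror_hom_kills_normal[OF N(1) tight \<open>b \<notin> N\<close> \<psi>]]
    by blast
  have \<psi>_inv_a: "\<psi> (inv a) = N #> a" and \<psi>_a2b: "\<psi> (a [^] (2::nat) \<otimes> b) = N #> b"
    by (rule mirror_hom_involutive[OF N(1) \<psi>])+
  have "\<Phi> \<in> iso (G Mod N) (G Mod N)"
  proof (rule Q.iso_of_hom_involutive_on_generators[OF \<Phi>(1)])
    show "{N #> a, N #> b, N #> c} \<subseteq> carrier (G Mod N)" by (simp add: \<pi>.hom_closed)
    show "generate (G Mod N) {N #> a, N #> b, N #> c} = carrier (G Mod N)"
      using rot by (simp add: rot_group4_def)
    show "\<Phi> (\<Phi> y) = y" if "y \<in> {N #> a, N #> b, N #> c}" for y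
      using that by (auto simp only: \<Phi>(2) \<psi>(2-4) \<psi>_inv_a \<psi>_a2b closed_simps insert_iff empty_iff)
  qed
  moreover have "\<Phi> (N #> a) = inv\<^bsub>G Mod N\<^esub> (N #> a)" by (simp add: \<Phi>(2) \<psi>(2) \<pi>.hom_inv)
  moreover have "\<Phi> (N #> b) = (N #> a) \<otimes>\<^bsub>G Mod N\<^esub> (N #> a) \<otimes>\<^bsub>G Mod N\<^esub> (N #> b)"
    by (simp only: \<Phi>(2) \<psi>(3) \<pi>.hom_mult[symmetric] numeral_2_eq_2 nat_pow_Suc nat_pow_0 l_one
        closed_simps)
  moreover have "\<Phi> (N #> c) = N #> c" by (simp add: \<Phi>(2) \<psi>(4))
  ultimately show thesis by (rule that)
qed

lemma not_tight_chiral_quotient: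
  assumes N: "N \<lhd> G" "N \<noteq> {\<one>}"
  shows "\<not> tight_chiral4 (G Mod N) (N #> a) (N #> b) (N #> c)"
proof
  assume T: "tight_chiral4 (G Mod N) (N #> a) (N #> b) (N #> c)"
  obtain \<Phi> where "\<Phi> \<in> iso (G Mod N) (G Mod N)" "\<Phi> (N #> a) = inv\<^bsub>G Mod N\<^esub> (N #> a)"
    "\<Phi> (N #> b) = (N #> a) \<otimes>\<^bsub>G Mod N\<^esub> (N #> a) \<otimes>\<^bsub>G Mod N\<^esub> (N #> b)" "\<Phi> (N #> c) = N #> c"
    by (rule mirror_automorphism_mod[OF N T])
  then show False using T unfolding tight_chiral4_def chiral4_def by blast
qed

theorem atomic_chiral4_gens: "atomic_chiral4 G a b c"
  using tight_chiral4_gens not_tight_chiral_quotient by (auto simp: atomic_chiral4_def)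

end

section \<open>A permutation representation on \<open>\<int>/2\<^sup>\<beta>\<close>\<close>

definition nf_word :: "nat \<Rightarrow> nat \<Rightarrow> nat \<Rightarrow> (gen3 \<times> bool) list" where
  "nf_word i j k = replicate i (S1, False) @ replicate j (S2, False) @ replicate k (S3, False)"

text \<open>The generators act on \<open>\<int>\<close> by \<open>a: x \<mapsto> x + \<delta> x\<close>, \<open>b: x \<mapsto> \<delta> x - x\<close>, \<open>c: x \<mapsto> x + 1\<close>,
  where \<open>\<delta> x\<close> is a multiple of \<open>q = 2\<^sup>\<beta>\<^sup>-\<^sup>2\<close> depending only on \<open>x mod 8\<close>. Modulo \<open>2\<^sup>\<beta>\<close> these
  maps satisfy the defining relations and already distinguish all \<open>32 \<cdot> 2\<^sup>\<beta>\<close> normal forms.\<close>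

locale lambda2_params =
  fixes \<beta> :: nat and \<epsilon> :: int
  assumes beta: "5 \<le> \<beta>" and eps: "\<epsilon> \<in> {1, -1}"
begin

abbreviation q :: int where "q \<equiv> 2 ^ (\<beta> - 2)"
abbreviation M :: int where "M \<equiv> 2 ^ \<beta>"

lemma M_eq: "M = 4 * q"
proof -
  have e: "\<beta> - 2 + 2 = \<beta>" using beta by simp
  have "M = 2 ^ (\<beta> - 2 + 2)" by (simp only: e)
  then show ?thesis by (simp add: power_add)
qed

lemma eight_dvd_q: "8 dvd q"
proof -
  have e: "3 + (\<beta> - 5) = \<beta> - 2" using beta by simp
  have "q = 2 ^ (3 + (\<beta> - 5))" by (simp only: e)
  then show ?thesis by (simp add: power_add)
qed

definition offset :: "int \<Rightarrow> int" where
  "offset r = (if r = 0 then 0 else if r = 1 then 0 else if r = 2 then \<epsilon> else if r = 3 then - \<epsilon>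
     else if r = 4 then 2 else if r = 5 then 2 else if r = 6 then 2 + \<epsilon> else 2 - \<epsilon>)"

definition delta :: "int \<Rightarrow> int" where
  "delta x = q * offset (x mod 8)"

definition letter_action :: "gen3 \<times> bool \<Rightarrow> int \<Rightarrow> int" where
  "letter_action p x = (case p of
      (S1, False) \<Rightarrow> x + delta x | (S1, True) \<Rightarrow> x - delta x
    | (S2, False) \<Rightarrow> delta x - x | (S2, True) \<Rightarrow> delta (- x) - x
    | (S3, False) \<Rightarrow> x + 1 | (S3, True) \<Rightarrow> x - 1)"

definition word_action :: "(gen3 \<times> bool) list \<Rightarrow> int \<Rightarrow> int" where
  "word_action w x = fold letter_action w x"

lemma word_action_Nil [simp]: "word_action [] x = x"
  and word_action_Cons [simp]: "word_action (p # w) x = word_action w (letter_action p x)"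
  and word_action_append [simp]: "word_action (u @ v) x = word_action v (word_action u x)"
  by (simp_all add: word_action_def)

lemma letter_action_simps [simp]:
  "letter_action (S1, False) x = x + delta x"
  "letter_action (S2, False) x = delta x - x"
  "letter_action (S3, False) x = x + 1"
  by (simp_all add: letter_action_def)

lemma eight_dvd_delta: "8 dvd delta x"
  using eight_dvd_q by (simp add: delta_def)

lemma delta_add_mult_8: "8 dvd e \<Longrightarrow> delta (x + e) = delta x"
  by (auto simp: delta_def elim!: dvdE)

lemma delta_add_delta [simp]:
  "delta (x + delta y) = delta x" "delta (x - delta y) = delta x"
  "delta (delta y + x) = delta x" "delta (delta y - x) = delta (- x)"
  using delta_add_mult_8[OF eight_dvd_delta, of x y] delta_add_mult_8[of "- delta y" x]
    delta_add_mult_8[OF eight_dvd_delta, of "- x" y] eight_dvd_delta[of y]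
  by (simp_all add: add.commute)

lemma delta_0: "delta 0 = 0" and delta_1: "delta 1 = 0" and delta_2: "delta 2 = \<epsilon> * q"
  by (simp_all add: delta_def offset_def)

lemma cong_M_imp_mod_8: "[x = y] (mod M) \<Longrightarrow> x mod 8 = y mod 8"
  using eight_dvd_q M_eq by (metis cong_def cong_dvd_modulus dvd_mult2 mult.commute)

lemma letter_action_cong: "[x = y] (mod M) \<Longrightarrow> [letter_action p x = letter_action p y] (mod M)"
proof -
  assume xy: "[x = y] (mod M)"
  then have "x mod 8 = y mod 8" by (rule cong_M_imp_mod_8)
  then have "delta x = delta y" "delta (- x) = delta (- y)"
    by (simp_all add: delta_def mod_minus_eq[of x, symmetric] mod_minus_eq[of y, symmetric])
  moreover have "[- x = - y] (mod M)" using xy by (simp add: cong_minus_minus_iff)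
  ultimately show ?thesis
    using xy by (cases p rule: prod.exhaust, rename_tac g b, case_tac g; case_tac b)
      (auto simp: letter_action_def intro: cong_add cong_diff)
qed

lemma word_action_cong: "[x = y] (mod M) \<Longrightarrow> [word_action w x = word_action w y] (mod M)"
  by (induction w arbitrary: x y) (auto simp: letter_action_cong)

lemma letter_action_cancel: "letter_action (g, \<not> b) (letter_action (g, b) x) = x"
  by (cases g; cases b) (simp_all add: letter_action_def)

abbreviation \<mu> :: int where "\<mu> \<equiv> 1 + \<epsilon> * q"

lemma eps_cases: "\<epsilon> = 1 \<or> \<epsilon> = -1"
  using eps by simp

lemma mod_8_cases:
  fixes r :: int
  assumes "0 \<le> r" "r < 8"
  shows "r = 0 \<or> r = 1 \<or> r = 2 \<or> r = 3 \<or> r = 4 \<or> r = 5 \<or> r = 6 \<or> r = 7"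
  using assms by auto

lemma offset_b_square: "4 dvd (offset ((- x) mod 8) - offset (x mod 8) - \<epsilon> * x)"
proof -
  have "4 dvd (offset ((- r) mod 8) - offset r - \<epsilon> * r)" if "0 \<le> r" "r < 8" for r
    unfolding offset_def using mod_8_cases[OF that] eps_cases by (elim disjE) simp_all
  from this[of "x mod 8"]
  have h: "4 dvd (offset ((- x) mod 8) - offset (x mod 8) - \<epsilon> * (x mod 8))"
    by (simp add: mod_minus_eq)
  have "offset ((- x) mod 8) - offset (x mod 8) - \<epsilon> * x =
      (offset ((- x) mod 8) - offset (x mod 8) - \<epsilon> * (x mod 8)) - 4 * (2 * \<epsilon> * (x div 8))"
    by (simp add: algebra_simps) (metis div_mult_mod_eq add.commute mult.assoc mult.commute distrib_left)
  then show ?thesis using h by (metis dvd_diff dvd_triv_left)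
qed

lemma offset_bc: "4 dvd (offset ((1 - x) mod 8) - offset (x mod 8))"
proof -
  have "4 dvd (offset ((1 - r) mod 8) - offset r)" if "0 \<le> r" "r < 8" for r
    unfolding offset_def using mod_8_cases[OF that] eps_cases by (elim disjE) simp_all
  from this[of "x mod 8"] show ?thesis by (simp add: mod_diff_right_eq)
qed

lemma offset_cb_square:
  "4 dvd (offset ((- 1 - x) mod 8) - offset ((x + 1) mod 8) - (offset ((- x) mod 8) - offset (x mod 8)) - \<epsilon>)"
proof -
  have "4 dvd (offset ((- 1 - r) mod 8) - offset ((r + 1) mod 8) - (offset ((- r) mod 8) - offset r) - \<epsilon>)"
    if "0 \<le> r" "r < 8" for r
    unfolding offset_def using mod_8_cases[OF that] eps_cases by (elim disjE) simp_all
  from this[of "x mod 8"] show ?thesis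
    by (simp add: mod_diff_right_eq mod_add_left_eq mod_minus_eq)
qed

lemma cong_q_mult: "4 dvd y \<Longrightarrow> [x + q * y = x] (mod M)"
  by (auto simp: cong_iff_dvd_diff M_eq elim!: dvdE)

lemma b_square_action: "word_action [(S2, False), (S2, False)] x = x - delta x + delta (- x)"
  by simp

lemma b_square_action_cong: "[word_action [(S2, False), (S2, False)] x = \<mu> * x] (mod M)"
proof -
  have "word_action [(S2, False), (S2, False)] x =
      \<mu> * x + q * (offset ((- x) mod 8) - offset (x mod 8) - \<epsilon> * x)"
    unfolding b_square_action by (simp add: delta_def algebra_simps)
  then show ?thesis using cong_q_mult[OF offset_b_square, of "\<mu> * x" x] by simp
qed

lemma b_pow_even_action: "[word_action (replicate (2 * m) (S2, False)) x = \<mu> ^ m * x] (mod M)"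
proof (induction m arbitrary: x)
  case (Suc m)
  have r: "replicate (2 * Suc m) (S2, False) = [(S2, False), (S2, False)] @ replicate (2 * m) (S2, False)"
    by (simp add: replicate_add[symmetric])
  have "[word_action (replicate (2 * Suc m) (S2, False)) x =
      \<mu> ^ m * word_action [(S2, False), (S2, False)] x] (mod M)"
    using Suc[of "word_action [(S2, False), (S2, False)] x"] by (simp only: r word_action_append)
  also have "[\<mu> ^ m * word_action [(S2, False), (S2, False)] x = \<mu> ^ m * (\<mu> * x)] (mod M)"
    using b_square_action_cong by (rule cong_scalar_left)
  also have "\<mu> ^ m * (\<mu> * x) = \<mu> ^ Suc m * x" by (simp only: power_Suc2 mult.assoc)
  finally show ?case .
qed simp

lemma mu_pow_4: "[\<mu> ^ 4 = 1] (mod M)"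
proof -
  obtain t where t: "q = 8 * t" using eight_dvd_q by (auto elim: dvdE)
  have "\<mu> ^ 4 - 1 = M * (\<epsilon> + 12 * t + 64 * \<epsilon> * t * t + 128 * t * t * t)"
    using eps_cases M_eq t by (elim disjE) (simp_all add: power4_eq_xxxx algebra_simps)
  then show ?thesis by (simp add: cong_iff_dvd_diff)
qed

lemma mu_pow_cong: "[\<mu> ^ m = 1 + int m * \<epsilon> * q] (mod M)"
proof (induction m)
  case (Suc m)
  obtain t where t: "q = 4 * t" using M_eq eight_dvd_q by (auto elim!: dvdE)
  have "\<epsilon> * \<epsilon> = 1" using eps_cases by auto
  then have "\<mu> * (1 + int m * \<epsilon> * q) - (1 + int (Suc m) * \<epsilon> * q) = M * (int m * t)"
    by (simp add: algebra_simps M_eq t)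
  then have "[\<mu> * (1 + int m * \<epsilon> * q) = 1 + int (Suc m) * \<epsilon> * q] (mod M)"
    by (simp add: cong_iff_dvd_diff)
  with cong_scalar_left[OF Suc, of \<mu>] show ?case by (simp add: cong_trans)
qed simp

lemma a_pow_action: "word_action (replicate m (S1, False)) x = x + int m * delta x"
proof (induction m arbitrary: x)
  case (Suc m)
  have "delta (x + int m * delta x) = delta x"
    using delta_add_mult_8[of "int m * delta x" x] eight_dvd_delta by simp
  then show ?case using Suc by (simp add: algebra_simps)
qed simp

lemma c_pow_action: "word_action (replicate m (S3, b)) x = (if b then x - int m else x + int m)"
  by (induction m arbitrary: x) (auto simp: letter_action_def)

lemma wpow_nonneg: "0 \<le> k \<Longrightarrow> wpow g k = replicate (nat k) (g, False)"
  by (simp add: wpow_def)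

lemma wpow_1: "wpow g 1 = [(g, False)]" and wpow_2: "wpow g 2 = [(g, False), (g, False)]"
  by (simp_all add: wpow_def numeral_2_eq_2)

lemma c_wpow_action: "word_action (wpow S3 z) x = x + z"
  by (auto simp: wpow_def c_pow_action)

lemma a_pow_4_action: "[word_action (wpow S1 4) x = x] (mod M)"
  using cong_q_mult[of "4 * offset (x mod 8)" x]
  by (simp add: wpow_nonneg a_pow_action delta_def ac_simps)

lemma b_pow_8_action: "[word_action (wpow S2 8) x = x] (mod M)"
proof -
  have "[word_action (wpow S2 8) x = \<mu> ^ 4 * x] (mod M)"
    using b_pow_even_action[of 4 x] by (simp add: wpow_nonneg)
  also have "[\<mu> ^ 4 * x = 1 * x] (mod M)" using mu_pow_4 by (rule cong_scalar_right)
  finally show ?thesis by simp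
qed

lemma c_pow_M_action: "[word_action (wpow S3 (2 ^ \<beta>)) x = x] (mod M)"
  by (simp add: c_wpow_action cong_iff_dvd_diff)

lemma ba_action: "letter_action (S2, False) (letter_action (S1, False) x) = - x"
  by simp

lemma abab_action: "word_action (wpow S1 1 @ wpow S2 1 @ wpow S1 1 @ wpow S2 1) x = x"
  by (simp only: wpow_1 append_Cons append_Nil word_action_Cons word_action_Nil ba_action minus_minus)

lemma abcabc_action:
  "word_action (wpow S1 1 @ wpow S2 1 @ wpow S3 1 @ wpow S1 1 @ wpow S2 1 @ wpow S3 1) x = x"
  by (simp only: wpow_1 append_Cons append_Nil word_action_Cons word_action_Nil ba_action) simp

lemma bcbc_action: "[word_action (wpow S2 1 @ wpow S3 1 @ wpow S2 1 @ wpow S3 1) x = x] (mod M)"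
proof -
  have "word_action (wpow S2 1 @ wpow S3 1 @ wpow S2 1 @ wpow S3 1) x =
      delta (delta x - x + 1) - (delta x - x + 1) + 1"
    by (simp add: wpow_1)
  also have "delta (delta x - x + 1) = delta (1 - x)"
    using delta_add_mult_8[OF eight_dvd_delta, of "1 - x" x] by (simp add: algebra_simps)
  finally have "word_action (wpow S2 1 @ wpow S3 1 @ wpow S2 1 @ wpow S3 1) x =
      x + q * (offset ((1 - x) mod 8) - offset (x mod 8))"
    by (simp add: delta_def algebra_simps)
  then show ?thesis using cong_q_mult[OF offset_bc] by simp
qed

lemma bba_action: "word_action (wpow S2 2 @ wpow S1 1) x = word_action (wpow S1 1 @ wpow S2 2) x"
proof -
  have "word_action (wpow S2 2 @ wpow S1 1) x =
      (x - delta x + delta (- x)) + delta (x - delta x + delta (- x))"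
    by (simp only: wpow_1 wpow_2 word_action_append b_square_action) simp
  also have "delta (x - delta x + delta (- x)) = delta x"
    using delta_add_mult_8[of "delta (- x) - delta x" x] eight_dvd_delta by (simp add: algebra_simps)
  finally have l: "word_action (wpow S2 2 @ wpow S1 1) x = x + delta (- x)" by simp
  have "word_action (wpow S1 1 @ wpow S2 2) x =
      (x + delta x) - delta (x + delta x) + delta (- (x + delta x))"
    by (simp only: wpow_1 wpow_2 word_action_append b_square_action) simp
  also have "delta (- (x + delta x)) = delta (- x)"
    using delta_add_mult_8[of "- delta x" "- x"] eight_dvd_delta by simp
  finally have r: "word_action (wpow S1 1 @ wpow S2 2) x = x + delta (- x)" by simp
  show ?thesis by (simp only: l r)
qed

lemma cbb_action:
  "[word_action (wpow S3 1 @ wpow S2 2) x = word_action (wpow S2 2 @ wpow S3 (1 + \<epsilon> * 2 ^ (\<beta> - 2))) x] (mod M)"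
proof -
  have l: "word_action (wpow S3 1 @ wpow S2 2) x = (x + 1) - delta (x + 1) + delta (- (x + 1))"
    by (simp only: wpow_1 wpow_2 word_action_append b_square_action) simp
  have r: "word_action (wpow S2 2 @ wpow S3 (1 + \<epsilon> * 2 ^ (\<beta> - 2))) x = x - delta x + delta (- x) + \<mu>"
    by (simp only: wpow_2 word_action_append c_wpow_action b_square_action)
  have e: "(x + 1) - delta (x + 1) + delta (- (x + 1)) = (x - delta x + delta (- x) + \<mu>) +
     q * (offset ((- 1 - x) mod 8) - offset ((x + 1) mod 8) - (offset ((- x) mod 8) - offset (x mod 8)) - \<epsilon>)"
    by (simp add: delta_def algebra_simps)
  show ?thesis unfolding l r e by (rule cong_q_mult[OF offset_cb_square])
qed

lemma relations_action:
  "(l, r) \<in> Lambda2_rels \<beta> \<epsilon> \<Longrightarrow> [word_action l x = word_action r x] (mod M)"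
  unfolding Lambda2_rels_def
  using a_pow_4_action b_pow_8_action c_pow_M_action abab_action abcabc_action bcbc_action
    bba_action cbb_action
  by (auto simp: cong_sym_eq)

lemma word_eqv_action:
  "word_eqv (Lambda2_rels \<beta> \<epsilon>) u v \<Longrightarrow> [word_action u x = word_action v x] (mod M)"
proof (induction arbitrary: x rule: word_eqv.induct)
  case (sym u v)
  then show ?case by (simp add: cong_sym_eq)
next
  case (trans u v w)
  then show ?case by (meson cong_trans)
next
  case (cancel u g b v)
  then show ?case by (simp add: letter_action_cancel)
next
  case (rel l r u v)
  then show ?case by (simp add: word_action_cong relations_action)
qed simp

abbreviation b_action :: "nat \<Rightarrow> int \<Rightarrow> int" where
  "b_action j x \<equiv> word_action (replicate j (S2, False)) x"

lemma nf_word_action: "word_action (nf_word i j k) x = b_action j (x + int i * delta x) + int k"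
  by (simp add: nf_word_def a_pow_action c_pow_action del: word_action_Cons)

lemma b_action_0: "b_action j 0 = 0"
  by (induction j) (simp_all add: delta_0)

lemma b_action_1: "[b_action j 1 = (- 1) ^ j * (1 + int (j div 2) * \<epsilon> * q)] (mod M)"
proof -
  have even_case: "[b_action (2 * m) y = (1 + int m * \<epsilon> * q) * y] (mod M)" for m y
    using cong_trans[OF b_pow_even_action cong_scalar_right[OF mu_pow_cong]] .
  show ?thesis
  proof (cases "even j")
    case True
    then obtain m where "j = 2 * m" by (rule evenE)
    then show ?thesis using even_case[of m 1] by simp
  next
    case False
    then obtain m where j: "j = Suc (2 * m)" by (metis oddE Suc_eq_plus1)
    have "b_action j 1 = b_action (2 * m) (- 1)" by (simp add: j delta_1)
    then show ?thesis using even_case[of m "- 1"] j by simp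
  qed
qed

lemma b_action_cancel:
  assumes "j \<le> 8" "[b_action j x = b_action j y] (mod M)"
  shows "[x = y] (mod M)"
proof -
  have "[b_action (8 - j) (b_action j x) = b_action (8 - j) (b_action j y)] (mod M)"
    using assms(2) by (rule word_action_cong)
  moreover have "b_action 8 z = b_action (8 - j) (b_action j z)" for z
    using assms(1) by (metis le_add_diff_inverse replicate_add word_action_append)
  ultimately have "[b_action 8 x = b_action 8 y] (mod M)" by simp
  then show ?thesis
    using b_pow_8_action[of x] b_pow_8_action[of y]
    by (simp add: wpow_nonneg) (meson cong_sym cong_trans)
qed

lemma cong_mult_q_cancel:
  assumes "[c + int m * \<epsilon> * q = c + int m' * \<epsilon> * q] (mod M)" "m < 4" "m' < 4"
  shows "m = m'"
proof -
  have "4 * q dvd q * ((int m - int m') * \<epsilon>)"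
    using assms(1) by (simp add: cong_iff_dvd_diff M_eq algebra_simps)
  then have "4 dvd (int m - int m') * \<epsilon>" by (simp add: mult.commute[of 4])
  then have "4 dvd int m - int m'" using eps_cases by (auto simp: dvd_diff_commute)
  then show ?thesis using assms(2,3) by presburger
qed

lemma b_action_1_inj:
  assumes "[b_action j 1 = b_action j' 1] (mod M)" "j < 8" "j' < 8"
  shows "j = j'"
proof -
  define A where "A l = 1 + int (l div 2) * \<epsilon> * q" for l
  have c1: "[(- 1) ^ j * A j = (- 1) ^ j' * A j'] (mod M)"
    using cong_trans[OF cong_trans[OF cong_sym[OF b_action_1] assms(1)] b_action_1]
    by (simp only: A_def)
  obtain t where t: "q = 8 * t" using eight_dvd_q by (auto elim: dvdE)
  have mod8: "((- 1) ^ l * A l) mod 8 = (if even l then 1 else 7)" for l :: nat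
  proof -
    have "(- 1) ^ l * A l = (- 1) ^ l + 8 * ((- 1) ^ l * int (l div 2) * \<epsilon> * t)"
      by (simp add: A_def t algebra_simps)
    then show ?thesis by (simp only: mod_mult_self2) (simp add: minus_one_power_iff)
  qed
  have par: "even j = even j'"
    using cong_M_imp_mod_8[OF c1] by (simp only: mod8) (simp split: if_splits)
  have "[A j = A j'] (mod M)"
  proof (cases "even j")
    case True
    then show ?thesis using c1 par by simp
  next
    case False
    then have "[- A j = - A j'] (mod M)" using c1 par by simp
    then show ?thesis by (simp only: cong_minus_minus_iff)
  qed
  then have "j div 2 = j' div 2"
    unfolding A_def by (rule cong_mult_q_cancel) (use assms(2,3) in simp_all)
  then show ?thesis using par by presburger
qed

text \<open>Evaluating at \<open>0\<close>, \<open>1\<close> and \<open>2\<close> recovers \<open>k\<close>, \<open>j\<close> and \<open>i\<close> in turn.\<close>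

lemma nf_word_action_inj:
  assumes ijk: "i < 4" "i' < 4" "j < 8" "j' < 8" "k < 2 ^ \<beta>" "k' < 2 ^ \<beta>"
    and cong: "\<And>x. [word_action (nf_word i j k) x = word_action (nf_word i' j' k') x] (mod M)"
  shows "i = i' \<and> j = j' \<and> k = k'"
proof -
  have "[int k = int k'] (mod M)" using cong[of 0] by (simp add: nf_word_action delta_0 b_action_0)
  moreover have "int k < M" "int k' < M" using ijk(5,6) by (simp_all add: of_nat_less_iff[symmetric])
  ultimately have k: "k = k'" using cong_less_imp_eq_int[of "int k" M "int k'"] by simp
  have cong_b: "[b_action j (x + int i * delta x) = b_action j' (x + int i' * delta x)] (mod M)" for x
    using cong[of x] by (simp only: nf_word_action k cong_add_rcancel)
  have j: "j = j'"
    using cong_b[of 1] ijk(3,4) by (intro b_action_1_inj) (simp_all add: delta_1)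
  have "[b_action j (2 + int i * delta 2) = b_action j (2 + int i' * delta 2)] (mod M)"
    using cong_b[of 2] by (simp only: j)
  then have "[2 + int i * (\<epsilon> * q) = 2 + int i' * (\<epsilon> * q)] (mod M)"
    using b_action_cancel[of j] ijk(3) by (simp add: delta_2)
  then have i: "i = i'"
    using cong_mult_q_cancel[of 2 i i'] ijk(1,2) by (simp add: mult.assoc)
  show ?thesis using i j k by simp
qed

end

section \<open>The group \<open>\<Lambda>\<^sub>2\<close>\<close>

context lambda2_params
begin

abbreviation \<sigma> :: "gen3 \<Rightarrow> (gen3 \<times> bool) list set" where "\<sigma> \<equiv> pres_gen (Lambda2_rels \<beta> \<epsilon>)"
abbreviation w\<^sub>0 :: nat where "w\<^sub>0 \<equiv> 2 ^ (\<beta> - 4)"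
abbreviation u\<^sub>0 :: nat where "u\<^sub>0 \<equiv> if \<epsilon> = 1 then 1 else 3"

lemma two_pow_beta: "(2::nat) ^ \<beta> = 16 * w\<^sub>0"
  using two_pow_split[of 4 \<beta>] beta by simp

lemma lambda2_group_Lambda2: "lambda2_group (Lambda2 \<beta> \<epsilon>) (\<sigma> S1) (\<sigma> S2) (\<sigma> S3) w\<^sub>0 u\<^sub>0"
proof -
  have "\<forall>(l, r) \<in> Lambda2_rels \<beta> \<epsilon>. eval_word (pres_group (Lambda2_rels \<beta> \<epsilon>)) \<sigma> l =
      eval_word (pres_group (Lambda2_rels \<beta> \<epsilon>)) \<sigma> r"
    using eval_word_pres_gen_rel[of _ _ "Lambda2_rels \<beta> \<epsilon>"] by blast
  then have "lambda2_relations (pres_group (Lambda2_rels \<beta> \<epsilon>)) (16 * w\<^sub>0) (1 + 4 * w\<^sub>0 * u\<^sub>0)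
      (\<sigma> S1) (\<sigma> S2) (\<sigma> S3)"
    by (rule eval_word_Lambda2_rels_iff[OF beta eps group_pres_group pres_gen_closed, THEN iffD1])
  then show ?thesis
    by (simp add: lambda2_group_def lambda2_group_axioms_def Lambda2_def group_pres_group
        pres_gen_closed)
qed

lemma Lambda2_nf:
  "lambda2_group.nf (Lambda2 \<beta> \<epsilon>) (\<sigma> S1) (\<sigma> S2) (\<sigma> S3) i j k = word_class (Lambda2_rels \<beta> \<epsilon>) (nf_word i j k)"
proof -
  let ?G = "pres_group (Lambda2_rels \<beta> \<epsilon>)"
  interpret group ?G by (rule group_pres_group)
  have "word_class (Lambda2_rels \<beta> \<epsilon>) (nf_word i j k) = eval_word ?G \<sigma> (nf_word i j k)"
    by (simp add: eval_word_pres_gen)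
  also have "\<dots> = \<sigma> S1 [^]\<^bsub>?G\<^esub> i \<otimes>\<^bsub>?G\<^esub> (\<sigma> S2 [^]\<^bsub>?G\<^esub> j \<otimes>\<^bsub>?G\<^esub> \<sigma> S3 [^]\<^bsub>?G\<^esub> k)"
    by (simp add: nf_word_def eval_word_append eval_word_replicate group_pres_group pres_gen_closed)
  finally show ?thesis
    unfolding lambda2_group.nf_def[OF lambda2_group_Lambda2]
    by (simp add: Lambda2_def m_assoc pres_gen_closed)
qed

lemma Lambda2_nf_inj:
  "inj_on (\<lambda>(i, j, k). lambda2_group.nf (Lambda2 \<beta> \<epsilon>) (\<sigma> S1) (\<sigma> S2) (\<sigma> S3) i j k)
    ({..<4} \<times> {..<8} \<times> {..<16 * w\<^sub>0})"
proof (rule inj_onI)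
  fix p p'
  assume p: "p \<in> {..<4} \<times> {..<8} \<times> {..<16 * w\<^sub>0}" "p' \<in> {..<4} \<times> {..<8} \<times> {..<16 * w\<^sub>0}"
    and eq: "(\<lambda>(i, j, k). lambda2_group.nf (Lambda2 \<beta> \<epsilon>) (\<sigma> S1) (\<sigma> S2) (\<sigma> S3) i j k) p =
      (\<lambda>(i, j, k). lambda2_group.nf (Lambda2 \<beta> \<epsilon>) (\<sigma> S1) (\<sigma> S2) (\<sigma> S3) i j k) p'"
  obtain i j k i' j' k' where p_eq: "p = (i, j, k)" "p' = (i', j', k')" by (metis prod_cases3)
  have "word_eqv (Lambda2_rels \<beta> \<epsilon>) (nf_word i j k) (nf_word i' j' k')"
    using eq by (simp add: p_eq Lambda2_nf word_class_eq_iff)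
  from nf_word_action_inj[OF _ _ _ _ _ _ word_eqv_action[OF this]]
  show "p = p'"
    using p two_pow_beta by (simp add: p_eq)
qed

lemma Lambda2_universal:
  assumes H: "group H" and xyz: "x \<in> carrier H" "y \<in> carrier H" "z \<in> carrier H"
    and rels: "lambda2_relations H (16 * w\<^sub>0) (1 + 4 * w\<^sub>0 * u\<^sub>0) x y z"
  shows "\<exists>\<psi> \<in> hom (Lambda2 \<beta> \<epsilon>) H. \<psi> (\<sigma> S1) = x \<and> \<psi> (\<sigma> S2) = y \<and> \<psi> (\<sigma> S3) = z"
proof -
  define f where "f g = (case g of S1 \<Rightarrow> x | S2 \<Rightarrow> y | S3 \<Rightarrow> z)" for g
  have f: "f g \<in> carrier H" for g using xyz by (cases g) (simp_all add: f_def)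
  have "lambda2_relations H (16 * w\<^sub>0) (1 + 4 * w\<^sub>0 * u\<^sub>0) (f S1) (f S2) (f S3)"
    using rels by (simp only: f_def gen3.case)
  then have "\<forall>(l, r) \<in> Lambda2_rels \<beta> \<epsilon>. eval_word H f l = eval_word H f r"
    by (simp only: eval_word_Lambda2_rels_iff[of \<beta> \<epsilon> H f, OF beta eps H f])
  then have "\<And>l r. (l, r) \<in> Lambda2_rels \<beta> \<epsilon> \<Longrightarrow> eval_word H f l = eval_word H f r" by blast
  then obtain \<psi> where \<psi>: "\<psi> \<in> hom (pres_group (Lambda2_rels \<beta> \<epsilon>)) H" "\<And>g. \<psi> (\<sigma> g) = f g"
    using pres_group_universal[of H f "Lambda2_rels \<beta> \<epsilon>", OF H f] by blast
  show ?thesis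
    by (rule bexI[of _ \<psi>]) (simp_all only: \<psi> Lambda2_def f_def gen3.case simp_thms)
qed

lemma lambda2_presentation_Lambda2:
  "lambda2_presentation (Lambda2 \<beta> \<epsilon>) (\<sigma> S1) (\<sigma> S2) (\<sigma> S3) w\<^sub>0 u\<^sub>0"
proof (intro lambda2_presentation.intro lambda2_group_exact.intro lambda2_presentation_axioms.intro
    lambda2_group_exact_axioms.intro lambda2_group_Lambda2 Lambda2_nf_inj Lambda2_universal)
  have "(UNIV :: gen3 set) = {S1, S2, S3}"
    using gen3.exhaust by auto
  then have "range \<sigma> = {\<sigma> S1, \<sigma> S2, \<sigma> S3}"
    by (metis image_empty image_insert)
  then show "generate (Lambda2 \<beta> \<epsilon>) {\<sigma> S1, \<sigma> S2, \<sigma> S3} = carrier (Lambda2 \<beta> \<epsilon>)"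
    using generate_pres_gen[of "Lambda2_rels \<beta> \<epsilon>"] by (simp add: Lambda2_def)
qed auto

end

theorem theorem5p8:
  fixes \<beta> :: nat and \<epsilon> :: int
  assumes "\<beta> \<ge> 5" and "\<epsilon> \<in> {1, -1}"
  shows "atomic_chiral4 (Lambda2 \<beta> \<epsilon>)
           (pres_gen (Lambda2_rels \<beta> \<epsilon>) S1) (pres_gen (Lambda2_rels \<beta> \<epsilon>) S2)
           (pres_gen (Lambda2_rels \<beta> \<epsilon>) S3)
      \<and> group.ord (Lambda2 \<beta> \<epsilon>) (pres_gen (Lambda2_rels \<beta> \<epsilon>) S1) = 4
      \<and> group.ord (Lambda2 \<beta> \<epsilon>) (pres_gen (Lambda2_rels \<beta> \<epsilon>) S2) = 8
      \<and> group.ord (Lambda2 \<beta> \<epsilon>) (pres_gen (Lambda2_rels \<beta> \<epsilon>) S3) = 2 ^ \<beta>"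
proof -
  have params: "lambda2_params \<beta> \<epsilon>" using assms by unfold_locales
  then interpret lambda2_presentation "Lambda2 \<beta> \<epsilon>" "pres_gen (Lambda2_rels \<beta> \<epsilon>) S1"
    "pres_gen (Lambda2_rels \<beta> \<epsilon>) S2" "pres_gen (Lambda2_rels \<beta> \<epsilon>) S3"
    "2 ^ (\<beta> - 4)" "if \<epsilon> = 1 then 1 else 3"
    by (rule lambda2_params.lambda2_presentation_Lambda2)
  show ?thesis
    using atomic_chiral4_gens ord_a ord_b ord_c lambda2_params.two_pow_beta[OF params] by simp
qed

end
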